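(* Let $(X,d,\mu)$ be as in the context, $1\le p<\infty$, $x\in X$, and assume $\mu$ is doubling at $x$. Suppose that one of the following estimates holds for all $0<2r\le R$ with a constant independent of $r$ and $R$: (a) $\operatorname{cap}_p(B_r,B_R)\gtrsim\mu(B_r)/r^p$; (b) $\operatorname{cap}_p(B_r,B_R)\gtrsim\mu(B_R)/R^p$; (c) $\operatorname{cap}_p(B_r,B_R)\gtrsim\frac{\mu(B_r)}{r^p}(\log\frac Rr)^{-p}$; (d) $\operatorname{cap}_p(B_r,B_R)\gtrsim\frac{\mu(B_R)}{R^p}(\log\frac Rr)^{-p}$; (e) $\operatorname{cap}_p(B_r,B_R)\gtrsim\frac{\mu(B_r)}{r^p}(\log\frac Rr)^{1-p}$; (f) $\operatorname{cap}_p(B_r,B_R)\gtrsim\frac{\mu(B_R)}{R^p}(\log\frac Rr)^{1-p}$; (g) $\operatorname{cap}_p(B_r,B_R)\gtrsim\frac{\mu(B_r)}{r^q}R^{q-p}$ for some $q>0$; (h) $\operatorname{cap}_p(B_r,B_R)\gtrsim\frac{\mu(B_R)}{R^q}r^{q-p}$ for some $q>0$. Then, respectively: (a) $p\in\underline{Q}(x)$; (b) $p\in\overline{Q}(x)$; (c) $p\le\sup\underline{Q}(x)$; (d) $p\ge\inf\overline{Q}(x)$; (e) $p\le\sup\underline{Q}(x)$; (f) $p\ge\inf\overline{Q}(x)$; (g) $q\in\underline{Q}(x)$; (h) $q\in\overline{Q}(x)$.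
   Context: $(X,d,\mu)$ metric space with positive complete Borel measure, $0<\mu(B)<\infty$ for all balls; $B_r=B(x,r)$. Doubling at $x$: $\mu(B(x,2r))\le C\mu(B(x,r))$ for all $r>0$. $\operatorname{cap}_p(E,\Omega)=\inf\{\int_\Omega g_u^p\,d\mu:u\in N^{1,p}_0(\Omega),u\ge1\text{ on }E\}$ with $N^{1,p}_0(\Omega)=\{f|_\Omega:f\in N^{1,p}(X),f=0 \text{ off }\Omega\}$, $N^{1,p}$ the Newtonian space defined via upper gradients, $g_u$ the minimal $p$-weak upper gradient. Exponent sets: $\underline{Q}_0(x)=\{q>0:\exists C_q,\ \mu(B_r)/\mu(B_R)\le C_q(r/R)^q,\ 0<r<R\le1\}$, $\overline{Q}_0(x)$ the same with $\ge$; if $X$ is unbounded, $\underline{Q}_\infty(x)$, $\overline{Q}_\infty(x)$ are defined identically but for $1\le r<R$. $\underline{Q}(x)=\underline{Q}_0(x)\cap\underline{Q}_\infty(x)$ and $\overline{Q}(x)=\overline{Q}_0(x)\cap\overline{Q}_\infty(x)$ if $X$ is unbounded; $\underline{Q}(x)=\underline{Q}_0(x)$, $\overline{Q}(x)=\overline{Q}_0(x)$ if $X$ is bounded. *)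

theory Defs
  imports "HOL-Analysis.Analysis"
begin

text \<open>X is the whole type 'a; mu is a positive complete Borel measure on X with
  0 < mu(B) < infinity for every ball B = ball y r, r > 0.\<close>

definition mms_standing :: "'a::metric_space measure \<Rightarrow> bool" where
  "mms_standing M \<longleftrightarrow>
     space M = UNIV \<and> sets borel \<subseteq> sets M \<and>
     (\<forall>A B. B \<in> null_sets M \<and> A \<subseteq> B \<longrightarrow> A \<in> sets M) \<and>
     (\<forall>y r. 0 < r \<longrightarrow> 0 < emeasure M (ball y r) \<and> emeasure M (ball y r) < \<infinity>)"

definition doubling_at :: "'a::metric_space measure \<Rightarrow> 'a \<Rightarrow> bool" where
  "doubling_at M x \<longleftrightarrow>
     (\<exists>C. \<forall>r>0. measure M (ball x (2 * r)) \<le> C * measure M (ball x r))"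

definition curve_length :: "(real \<Rightarrow> 'a::metric_space) \<Rightarrow> real \<Rightarrow> real \<Rightarrow> ereal" where
  "curve_length \<gamma> a b =
     (SUP ts \<in> {ts::real list. sorted ts \<and> ts \<noteq> [] \<and> hd ts = a \<and> last ts = b}.
        ereal (\<Sum>i<length ts - 1. dist (\<gamma> (ts ! i)) (\<gamma> (ts ! Suc i))))"

text \<open>Nonconstant compact rectifiable curves, arc-length parametrized: gamma : [0,l] -> X.\<close>
definition arclength_curve :: "(real \<Rightarrow> 'a::metric_space) \<Rightarrow> real \<Rightarrow> bool" where
  "arclength_curve \<gamma> l \<longleftrightarrow> 0 < l \<and> continuous_on {0..l} \<gamma> \<and>
     (\<forall>s t. 0 \<le> s \<and> s \<le> t \<and> t \<le> l \<longrightarrow> curve_length \<gamma> s t = ereal (t - s))"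

definition line_integral :: "(real \<Rightarrow> 'a) \<Rightarrow> real \<Rightarrow> ('a \<Rightarrow> ennreal) \<Rightarrow> ennreal" where
  "line_integral \<gamma> l \<rho> = (\<integral>\<^sup>+ t. \<rho> (\<gamma> t) * indicator {0..l} t \<partial>lborel)"

definition epow :: "ennreal \<Rightarrow> real \<Rightarrow> ennreal" where
  "epow a p = (if a = \<infinity> then \<infinity> else ennreal (enn2real a powr p))"

definition p_modulus :: "'a::metric_space measure \<Rightarrow> real \<Rightarrow> ((real \<Rightarrow> 'a) \<times> real) set \<Rightarrow> ennreal" where
  "p_modulus M p \<Gamma> =
     (INF \<rho> \<in> {\<rho>. \<rho> \<in> borel_measurable borel \<and> (\<forall>(\<gamma>, l) \<in> \<Gamma>. 1 \<le> line_integral \<gamma> l \<rho>)}.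
        \<integral>\<^sup>+ y. epow (\<rho> y) p \<partial>M)"

definition ug_ineq :: "('a \<Rightarrow> ereal) \<Rightarrow> ('a \<Rightarrow> ennreal) \<Rightarrow> (real \<Rightarrow> 'a) \<Rightarrow> real \<Rightarrow> bool" where
  "ug_ineq u g \<gamma> l \<longleftrightarrow>
     (if \<bar>u (\<gamma> 0)\<bar> = \<infinity> \<or> \<bar>u (\<gamma> l)\<bar> = \<infinity> then line_integral \<gamma> l g = \<infinity>
      else ennreal (real_of_ereal \<bar>u (\<gamma> 0) - u (\<gamma> l)\<bar>) \<le> line_integral \<gamma> l g)"

definition p_weak_ug :: "'a::metric_space measure \<Rightarrow> real \<Rightarrow> ('a \<Rightarrow> ereal) \<Rightarrow> ('a \<Rightarrow> ennreal) \<Rightarrow> bool" where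
  "p_weak_ug M p u g \<longleftrightarrow> g \<in> borel_measurable borel \<and>
     p_modulus M p {(\<gamma>, l). arclength_curve \<gamma> l \<and> \<not> ug_ineq u g \<gamma> l} = 0"

definition newtonian :: "'a::metric_space measure \<Rightarrow> real \<Rightarrow> ('a \<Rightarrow> ereal) set" where
  "newtonian M p = {u. u \<in> borel_measurable M \<and>
     (\<integral>\<^sup>+ y. epow (e2ennreal \<bar>u y\<bar>) p \<partial>M) < \<infinity> \<and>
     (\<exists>g. p_weak_ug M p u g \<and> (\<integral>\<^sup>+ y. epow (g y) p \<partial>M) < \<infinity>)}"

definition minimal_pwug :: "'a::metric_space measure \<Rightarrow> real \<Rightarrow> ('a \<Rightarrow> ereal) \<Rightarrow> ('a \<Rightarrow> ennreal) \<Rightarrow> bool" where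
  "minimal_pwug M p u g \<longleftrightarrow> p_weak_ug M p u g \<and> (\<integral>\<^sup>+ y. epow (g y) p \<partial>M) < \<infinity> \<and>
     (\<forall>g'. p_weak_ug M p u g' \<and> (\<integral>\<^sup>+ y. epow (g' y) p \<partial>M) < \<infinity> \<longrightarrow> (AE y in M. g y \<le> g' y))"

text \<open>cap_p(E, Omega): infimum over u in N^{1,p}_0(Omega) (represented by f in N^{1,p}(X)
  vanishing off Omega) with u >= 1 on E of the integral over Omega of g_u^p.\<close>
definition cap_p :: "'a::metric_space measure \<Rightarrow> real \<Rightarrow> 'a set \<Rightarrow> 'a set \<Rightarrow> ennreal" where
  "cap_p M p E \<Omega> =
     (INF u \<in> {u. u \<in> newtonian M p \<and> (\<forall>y. y \<notin> \<Omega> \<longrightarrow> u y = 0) \<and> (\<forall>y\<in>E. 1 \<le> u y)}.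
        \<integral>\<^sup>+ y. epow ((SOME g. minimal_pwug M p u g) y) p * indicator \<Omega> y \<partial>M)"

definition lowerQ0 :: "'a::metric_space measure \<Rightarrow> 'a \<Rightarrow> real set" where
  "lowerQ0 M x = {q. 0 < q \<and> (\<exists>C>0. \<forall>r R. 0 < r \<and> r < R \<and> R \<le> 1 \<longrightarrow>
      measure M (ball x r) / measure M (ball x R) \<le> C * (r / R) powr q)}"

definition upperQ0 :: "'a::metric_space measure \<Rightarrow> 'a \<Rightarrow> real set" where
  "upperQ0 M x = {q. 0 < q \<and> (\<exists>C>0. \<forall>r R. 0 < r \<and> r < R \<and> R \<le> 1 \<longrightarrow>
      measure M (ball x r) / measure M (ball x R) \<ge> C * (r / R) powr q)}"

definition lowerQinf :: "'a::metric_space measure \<Rightarrow> 'a \<Rightarrow> real set" where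
  "lowerQinf M x = {q. 0 < q \<and> (\<exists>C>0. \<forall>r R. 1 \<le> r \<and> r < R \<longrightarrow>
      measure M (ball x r) / measure M (ball x R) \<le> C * (r / R) powr q)}"

definition upperQinf :: "'a::metric_space measure \<Rightarrow> 'a \<Rightarrow> real set" where
  "upperQinf M x = {q. 0 < q \<and> (\<exists>C>0. \<forall>r R. 1 \<le> r \<and> r < R \<longrightarrow>
      measure M (ball x r) / measure M (ball x R) \<ge> C * (r / R) powr q)}"

definition lowerQ :: "'a::metric_space measure \<Rightarrow> 'a \<Rightarrow> real set" where
  "lowerQ M x = (if bounded (UNIV :: 'a set) then lowerQ0 M x else lowerQ0 M x \<inter> lowerQinf M x)"

definition upperQ :: "'a::metric_space measure \<Rightarrow> 'a \<Rightarrow> real set" where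
  "upperQ M x = (if bounded (UNIV :: 'a set) then upperQ0 M x else upperQ0 M x \<inter> upperQinf M x)"

end

theory Submission
  imports Defs
begin

text \<open>Testing the capacity with a Lipschitz cutoff that equals 1 on B(x,r) and vanishes
  outside B(x,s) gives cap_p(B(x,r), B(x,R)) \<le> \<mu>(B(x,s))/(s-r)^p.  With s = R this is at most
  2^p \<mu>(B(x,R))/R^p, and with s = 2r and doubling it is at most D \<mu>(B(x,r))/r^p.  Played against
  an assumed lower bound, either estimate bounds \<mu>(B(x,r))/\<mu>(B(x,R)) by a power of r/R for
  2r \<le> R, and the remaining range R < 2r is covered by monotonicity or doubling; a
  logarithmic factor only costs an arbitrarily small change of the exponent.

  Since cap_p is defined through the minimal p-weak upper gradient, the cutoff argument needs
  minimal p-weak upper gradients to exist.  They do: p-weak upper gradients of finite energy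
  are closed under pointwise minima and under decreasing limits, so the decreasing limit of
  a minimizing sequence of running minima is a minimizer, and a minimizer is minimal.\<close>

lemma borel_measurable_mms:
  "mms_standing M \<Longrightarrow> f \<in> borel_measurable borel \<Longrightarrow> f \<in> borel_measurable M"
  unfolding mms_standing_def measurable_def by auto

lemma epow_ennreal: "0 \<le> v \<Longrightarrow> epow (ennreal v) p = ennreal (v powr p)"
  unfolding epow_def by simp

lemma epow_top[simp]: "epow top p = top"
  unfolding epow_def by simp

lemma epow_zero[simp]: "0 < p \<Longrightarrow> epow 0 p = 0"
  unfolding epow_def by simp

lemma epow_one[simp]: "epow 1 p = 1"
  unfolding epow_def by simp

lemma epow_mono: assumes "a \<le> b" "0 \<le> p" shows "epow a p \<le> epow b p"
proof (cases "b = \<infinity>")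
  case True then show ?thesis by simp
next
  case False
  then have "a \<noteq> \<infinity>" using assms by (auto simp: top_unique)
  then show ?thesis using False assms unfolding epow_def
    by (auto intro!: ennreal_leI powr_mono2 enn2real_mono simp: less_top)
qed

lemma epow_strict_mono: assumes "a < b" "0 < p" shows "epow a p < epow b p"
proof (cases "b = \<infinity>")
  case True
  then have "a \<noteq> \<infinity>" using assms by auto
  then show ?thesis using True unfolding epow_def by simp
next
  case False
  then have "a \<noteq> \<infinity>" using assms by (auto simp: top_unique)
  have "enn2real a powr p < enn2real b powr p"
    using assms False \<open>a \<noteq> \<infinity>\<close> by (intro powr_less_mono2) (auto simp: enn2real_less_iff less_top)
  then show ?thesis using False \<open>a \<noteq> \<infinity>\<close> unfolding epow_def by (simp add: ennreal_less_iff)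
qed

lemma epow_ennreal_mult:
  assumes "0 < c" "0 < p"
  shows "epow (ennreal c * a) p = ennreal (c powr p) * epow a p"
proof (cases "a = \<infinity>")
  case True then show ?thesis using assms by (simp add: ennreal_mult_top)
next
  case False
  then have "ennreal c * a \<noteq> \<infinity>" by (simp add: ennreal_mult_eq_top_iff)
  moreover have "enn2real (ennreal c * a) = c * enn2real a" using assms by (simp add: enn2real_mult)
  ultimately show ?thesis using False assms unfolding epow_def
    by (simp add: powr_mult ennreal_mult)
qed

lemma borel_measurable_epow_ennreal: "(\<lambda>a. epow a p) \<in> borel_measurable borel"
proof -
  have "(\<lambda>a. epow a p) = (\<lambda>a. if a \<in> {top} then top else ennreal (enn2real a powr p))"
    by (auto simp: epow_def fun_eq_iff)
  also have "\<dots> \<in> borel_measurable borel"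
    by (intro measurable_If_set) auto
  finally show ?thesis .
qed

lemma borel_measurable_epow[measurable]:
  "g \<in> borel_measurable N \<Longrightarrow> (\<lambda>y. epow (g y) p) \<in> borel_measurable N"
  using measurable_compose[OF _ borel_measurable_epow_ennreal] by blast

lemma le_root_of_epow_le:
  assumes "epow x p \<le> ennreal s" "0 < p"
  shows "x \<le> ennreal (max 0 s powr (1/p))"
proof -
  have "x \<noteq> \<infinity>" using assms(1) by (auto simp: top_unique)
  then have e: "ennreal (enn2real x powr p) \<le> ennreal s" using assms(1) unfolding epow_def by simp
  have "enn2real x powr p \<le> max 0 s"
    using e by (cases "0 \<le> s") (auto simp: ennreal_le_iff2)
  then have "(enn2real x powr p) powr (1/p) \<le> max 0 s powr (1/p)"
    using assms(2) by (intro powr_mono2) auto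
  then have "enn2real x \<le> max 0 s powr (1/p)" using assms(2) by (simp add: powr_powr)
  then have "ennreal (enn2real x) \<le> ennreal (max 0 s powr (1/p))" by (rule ennreal_leI)
  moreover have "ennreal (enn2real x) = x" using \<open>x \<noteq> \<infinity>\<close> by (simp add: less_top)
  ultimately show ?thesis by simp
qed

lemma epow_SUP_le_suminf:
  fixes a :: "nat \<Rightarrow> ennreal"
  assumes "0 < p"
  shows "epow (SUP n. a n) p \<le> (\<Sum>n. epow (a n) p)"
proof (cases "(\<Sum>n. epow (a n) p) = \<infinity>")
  case True then show ?thesis by simp
next
  case False
  define s where "s = enn2real (\<Sum>n. epow (a n) p)"
  have s: "(\<Sum>n. epow (a n) p) = ennreal s" "0 \<le> s"
    using False unfolding s_def by (auto simp: less_top)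
  have "epow (a n) p \<le> ennreal s" for n
  proof -
    have "sum (\<lambda>n. epow (a n) p) {n} \<le> (\<Sum>n. epow (a n) p)"
      by (rule sum_le_suminf) (auto intro: summableI)
    then show ?thesis using s by simp
  qed
  then have "a n \<le> ennreal (max 0 s powr (1/p))" for n using le_root_of_epow_le assms by blast
  then have "(SUP n. a n) \<le> ennreal (max 0 s powr (1/p))" by (rule SUP_least)
  then have "epow (SUP n. a n) p \<le> epow (ennreal (max 0 s powr (1/p))) p"
    using assms by (intro epow_mono) auto
  also have "\<dots> = ennreal s" using assms s(2) by (simp add: epow_ennreal powr_powr)
  finally show ?thesis using s by simp
qed

lemma arclength_curve_dist_le:
  assumes "arclength_curve \<gamma> l" "0 \<le> s" "s \<le> t" "t \<le> l"
  shows "dist (\<gamma> s) (\<gamma> t) \<le> t - s"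
proof -
  have "ereal (\<Sum>i<length [s,t] - 1. dist (\<gamma> ([s,t] ! i)) (\<gamma> ([s,t] ! Suc i))) \<le> curve_length \<gamma> s t"
    unfolding curve_length_def by (rule SUP_upper) (use assms in auto)
  moreover have "curve_length \<gamma> s t = ereal (t - s)"
    using assms unfolding arclength_curve_def by auto
  ultimately show ?thesis by simp
qed

lemma curve_length_shift:
  "curve_length (\<lambda>t. \<gamma> (a + t)) s t = curve_length \<gamma> (a + s) (a + t)"
proof -
  let ?S = "\<lambda>s t. {ts::real list. sorted ts \<and> ts \<noteq> [] \<and> hd ts = s \<and> last ts = t}"
  let ?F = "\<lambda>\<gamma> ts. ereal (\<Sum>i<length ts - 1. dist (\<gamma> (ts ! i)) (\<gamma> (ts ! Suc i)))"
  have img: "?S (a+s) (a+t) = map ((+) a) ` ?S s t"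
  proof
    show "map ((+) a) ` ?S s t \<subseteq> ?S (a+s) (a+t)"
      by (auto simp: sorted_iff_nth_mono hd_map last_map)
    show "?S (a+s) (a+t) \<subseteq> map ((+) a) ` ?S s t"
    proof
      fix ts assume ts: "ts \<in> ?S (a+s) (a+t)"
      have "map (\<lambda>x. x - a) ts \<in> ?S s t"
        using ts by (auto simp: sorted_iff_nth_mono hd_map last_map)
      moreover have "ts = map ((+) a) (map (\<lambda>x. x - a) ts)" by (induct ts) auto
      ultimately show "ts \<in> map ((+) a) ` ?S s t" by blast
    qed
  qed
  have "curve_length \<gamma> (a + s) (a + t) = (SUP ts \<in> map ((+) a) ` ?S s t. ?F \<gamma> ts)"
    unfolding curve_length_def img ..
  also have "\<dots> = (SUP ts \<in> ?S s t. ?F \<gamma> (map ((+) a) ts))"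
    by (simp add: image_comp)
  also have "\<dots> = curve_length (\<lambda>t. \<gamma> (a + t)) s t"
    unfolding curve_length_def by (rule SUP_cong) auto
  finally show ?thesis by simp
qed

lemma arclength_curve_subpath:
  assumes "arclength_curve \<gamma> l" "0 \<le> a" "a < b" "b \<le> l"
  shows "arclength_curve (\<lambda>t. \<gamma> (a + t)) (b - a)"
  unfolding arclength_curve_def
proof (intro conjI allI impI)
  have c: "continuous_on {0..l} \<gamma>" using assms(1) unfolding arclength_curve_def by auto
  show "continuous_on {0..b - a} (\<lambda>t. \<gamma> (a + t))"
    by (rule continuous_on_compose2[OF c]) (auto intro!: continuous_intros simp: assms)
  fix s t assume "0 \<le> s \<and> s \<le> t \<and> t \<le> b - a"
  then show "curve_length (\<lambda>t. \<gamma> (a + t)) s t = ereal (t - s)"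
    using assms(1,2,4) unfolding curve_length_shift arclength_curve_def by auto
qed (use assms in simp)

lemma borel_measurable_along_curve:
  fixes g :: "'a::metric_space \<Rightarrow> ennreal" and \<gamma> :: "real \<Rightarrow> 'a"
  assumes "continuous_on {0..l} \<gamma>" "0 \<le> l" "g \<in> borel_measurable borel" "0 \<le> a" "b \<le> l"
  shows "(\<lambda>s. g (\<gamma> s) * indicator {a..b} s) \<in> borel_measurable borel"
proof -
  define \<gamma>' where "\<gamma>' t = \<gamma> (max 0 (min l t))" for t
  have "continuous_on UNIV (\<lambda>t. \<gamma> (max 0 (min l t)))"
    by (rule continuous_on_compose2[OF assms(1)]) (auto intro!: continuous_intros simp: assms(2))
  then have "\<gamma>' \<in> borel_measurable borel"
    unfolding \<gamma>'_def by (rule borel_measurable_continuous_onI)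
  then have "(\<lambda>s. g (\<gamma>' s) * indicator {a..b} s) \<in> borel_measurable borel"
    using assms(3) by measurable
  moreover have "(\<lambda>s. g (\<gamma>' s) * indicator {a..b} s) = (\<lambda>s. g (\<gamma> s) * indicator {a..b} s)"
    using assms(4,5) by (auto simp: \<gamma>'_def indicator_def fun_eq_iff)
  ultimately show ?thesis by simp
qed

lemma line_integral_subpath:
  fixes g :: "'a::metric_space \<Rightarrow> ennreal"
  assumes "continuous_on {0..l} \<gamma>" "0 \<le> l" "g \<in> borel_measurable borel" "0 \<le> a" "b \<le> l"
  shows "line_integral (\<lambda>t. \<gamma> (a + t)) (b - a) g = (\<integral>\<^sup>+ s. g (\<gamma> s) * indicator {a..b} s \<partial>lborel)"
proof -
  have "(\<integral>\<^sup>+ s. g (\<gamma> s) * indicator {a..b} s \<partial>lborel)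
        = ennreal \<bar>1\<bar> * (\<integral>\<^sup>+ x. g (\<gamma> (a + 1 * x)) * indicator {a..b} (a + 1 * x) \<partial>lborel)"
    using nn_integral_real_affine[OF borel_measurable_along_curve[OF assms], of 1 a] by simp
  also have "\<dots> = line_integral (\<lambda>t. \<gamma> (a + t)) (b - a) g"
    unfolding line_integral_def by (auto intro!: nn_integral_cong simp: indicator_def)
  finally show ?thesis by simp
qed

lemma line_integral_subpath_le:
  fixes g :: "'a::metric_space \<Rightarrow> ennreal"
  assumes "continuous_on {0..l} \<gamma>" "g \<in> borel_measurable borel" "0 \<le> a" "a \<le> b" "b \<le> l"
  shows "line_integral (\<lambda>t. \<gamma> (a + t)) (b - a) g \<le> line_integral \<gamma> l g"
proof -
  have "line_integral (\<lambda>t. \<gamma> (a + t)) (b - a) g = (\<integral>\<^sup>+ s. g (\<gamma> s) * indicator {a..b} s \<partial>lborel)"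
    using assms by (intro line_integral_subpath[where l=l]) auto
  also have "\<dots> \<le> line_integral \<gamma> l g"
    unfolding line_integral_def by (rule nn_integral_mono) (use assms in \<open>auto simp: indicator_def\<close>)
  finally show ?thesis .
qed

lemma has_integral_along_curve:
  fixes g :: "'a::metric_space \<Rightarrow> ennreal" and \<gamma> :: "real \<Rightarrow> 'a"
  assumes "continuous_on {0..l} \<gamma>" "0 \<le> l" "g \<in> borel_measurable borel" "0 \<le> a" "b \<le> l"
    and fin: "(\<integral>\<^sup>+ s. g (\<gamma> s) * indicator {a..b} s \<partial>lborel) < \<infinity>"
  shows "((\<lambda>s. enn2real (g (\<gamma> s))) has_integral
           enn2real (\<integral>\<^sup>+ s. g (\<gamma> s) * indicator {a..b} s \<partial>lborel)) {a..b}"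
proof -
  let ?h = "\<lambda>s. g (\<gamma> s) * indicator {a..b} s"
  have m: "?h \<in> borel_measurable borel" using borel_measurable_along_curve assms by blast
  have "AE s in lborel. ?h s \<noteq> \<infinity>"
    using nn_integral_noteq_infinite[of ?h lborel] m fin by (auto simp: less_top)
  then have "(\<integral>\<^sup>+ s. ennreal (enn2real (?h s)) \<partial>lborel) = (\<integral>\<^sup>+ s. ?h s \<partial>lborel)"
    by (intro nn_integral_cong_AE) (auto simp: less_top)
  also have "\<dots> = ennreal (enn2real (\<integral>\<^sup>+ s. ?h s \<partial>lborel))"
    using fin by (simp add: less_top)
  finally have "((\<lambda>s. enn2real (?h s)) has_integral enn2real (\<integral>\<^sup>+ s. ?h s \<partial>lborel)) UNIV"
    using m by (intro nn_integral_has_integral) auto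
  moreover have "(\<lambda>s. enn2real (?h s)) = (\<lambda>s. if s \<in> {a..b} then enn2real (g (\<gamma> s)) else 0)"
    by (auto simp: indicator_def fun_eq_iff)
  ultimately show ?thesis using has_integral_restrict_UNIV by metis
qed

section \<open>The upper gradient inequality for a minimum\<close>

lemma le_Henstock_errors:
  fixes d c g1 g2 g3 I1 I2 I3 :: real
  assumes "min g1 g2 \<le> g3" "0 \<le> c" "d \<le> I1" "d \<le> I2"
  shows "d \<le> I3 + \<bar>c * g1 - I1\<bar> + \<bar>c * g2 - I2\<bar> + \<bar>c * g3 - I3\<bar>"
proof (cases "g1 \<le> g3")
  case True
  then have "c * g1 \<le> c * g3" using assms(2) by (rule mult_left_mono)
  then show ?thesis using assms(3) by linarith
next
  case False
  then have "c * g2 \<le> c * g3" using assms(1,2) by (intro mult_left_mono) auto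
  then show ?thesis using assms(4) by linarith
qed

lemma Henstock_gauge_real:
  fixes G :: "real \<Rightarrow> real"
  assumes "G integrable_on {0..l}" "0 < e"
  shows "\<exists>d. gauge d \<and> (\<forall>p. p tagged_partial_division_of cbox 0 l \<longrightarrow> d fine p \<longrightarrow>
           (\<Sum>(x, k)\<in>p. \<bar>Henstock_Kurzweil_Integration.content k * G x - integral k G\<bar>) < e)"
proof -
  have eq: "(\<lambda>(x, k). norm (Henstock_Kurzweil_Integration.content k *\<^sub>R G x - integral k G))
      = (\<lambda>(x, k). \<bar>Henstock_Kurzweil_Integration.content k * G x - integral k G\<bar>)"
    by (auto simp: fun_eq_iff)
  obtain d where "gauge d" and "\<And>p. p tagged_partial_division_of cbox 0 l \<Longrightarrow> d fine p \<Longrightarrow>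
      (\<Sum>(x, k)\<in>p. norm (Henstock_Kurzweil_Integration.content k *\<^sub>R G x - integral k G)) < e"
    by (rule Henstock_lemma[of G 0 l e]) (use assms in auto)
  then show ?thesis unfolding eq by blast
qed

text \<open>No regularity of f is needed: on each interval of a tagged division fine enough for all
  three Henstock-Kurzweil integrals, compare with whichever of G1, G2 is smaller at the tag.\<close>
lemma abs_diff_le_integral_of_min:
  fixes f G1 G2 G3 :: "real \<Rightarrow> real"
  assumes l: "0 \<le> l"
    and int: "G1 integrable_on {0..l}" "G2 integrable_on {0..l}" "G3 integrable_on {0..l}"
    and min: "\<And>t. min (G1 t) (G2 t) \<le> G3 t"
    and b1: "\<And>a b. 0 \<le> a \<Longrightarrow> a \<le> b \<Longrightarrow> b \<le> l \<Longrightarrow> \<bar>f b - f a\<bar> \<le> integral {a..b} G1"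
    and b2: "\<And>a b. 0 \<le> a \<Longrightarrow> a \<le> b \<Longrightarrow> b \<le> l \<Longrightarrow> \<bar>f b - f a\<bar> \<le> integral {a..b} G2"
  shows "\<bar>f l - f 0\<bar> \<le> integral {0..l} G3"
proof (rule field_le_epsilon)
  fix e :: real assume e: "0 < e"
  define err where "err G = (\<lambda>(x, k). \<bar>Henstock_Kurzweil_Integration.content k * G x - integral k G\<bar>)"
    for G :: "real \<Rightarrow> real"
  obtain d1 where d1: "gauge d1"
    "\<And>p. p tagged_partial_division_of cbox 0 l \<Longrightarrow> d1 fine p \<Longrightarrow> sum (err G1) p < e/3"
    using Henstock_gauge_real[OF int(1), of "e/3"] e unfolding err_def by auto
  obtain d2 where d2: "gauge d2"
    "\<And>p. p tagged_partial_division_of cbox 0 l \<Longrightarrow> d2 fine p \<Longrightarrow> sum (err G2) p < e/3"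
    using Henstock_gauge_real[OF int(2), of "e/3"] e unfolding err_def by auto
  obtain d3 where d3: "gauge d3"
    "\<And>p. p tagged_partial_division_of cbox 0 l \<Longrightarrow> d3 fine p \<Longrightarrow> sum (err G3) p < e/3"
    using Henstock_gauge_real[OF int(3), of "e/3"] e unfolding err_def by auto
  obtain p where p: "p tagged_division_of {0..l}" and fp: "(\<lambda>x. d1 x \<inter> d2 x \<inter> d3 x) fine p"
    using fine_division_exists_real[of "\<lambda>x. d1 x \<inter> d2 x \<inter> d3 x"] d1(1) d2(1) d3(1)
    by (auto simp: gauge_Int)
  have pp: "p tagged_partial_division_of cbox 0 l" using p by (auto simp: tagged_division_of_def)
  have tag: "\<bar>f (Sup k) - f (Inf k)\<bar> \<le> integral k G3 + err G1 (x, k) + err G2 (x, k) + err G3 (x, k)"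
    if xk: "(x, k) \<in> p" for x k
  proof -
    obtain u v where k: "k = {u..v}" "u \<le> v" and "0 \<le> u" "v \<le> l"
      using tagged_division_ofD(2,3,4)[OF p xk] by fastforce
    then have "Sup k = v" "Inf k = u" by auto
    then show ?thesis
      unfolding err_def using le_Henstock_errors[OF min[of x], of "Henstock_Kurzweil_Integration.content k"]
        b1[OF \<open>0 \<le> u\<close> \<open>u \<le> v\<close> \<open>v \<le> l\<close>] b2[OF \<open>0 \<le> u\<close> \<open>u \<le> v\<close> \<open>v \<le> l\<close>] k
      by simp
  qed
  have "f l - f 0 = (\<Sum>(x, k)\<in>p. f (Sup k) - f (Inf k))"
    using additive_tagged_division_1[OF l p, of f] by simp
  then have "\<bar>f l - f 0\<bar> \<le> (\<Sum>(x, k)\<in>p. \<bar>f (Sup k) - f (Inf k)\<bar>)"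
    by (metis (mono_tags, lifting) sum_abs case_prod_beta sum.cong)
  also have "\<dots> \<le> (\<Sum>(x, k)\<in>p. integral k G3 + err G1 (x, k) + err G2 (x, k) + err G3 (x, k))"
    by (rule sum_mono) (use tag in auto)
  also have "\<dots> = (\<Sum>(x, k)\<in>p. integral k G3) + sum (err G1) p + sum (err G2) p + sum (err G3) p"
    by (simp add: sum.distrib case_prod_beta)
  also have "(\<Sum>(x, k)\<in>p. integral k G3) = integral {0..l} G3"
    using integral_combine_tagged_division_topdown[of G3 0 l p] int(3) p by simp
  finally have "\<bar>f l - f 0\<bar> \<le> integral {0..l} G3 + sum (err G1) p + sum (err G2) p + sum (err G3) p" .
  moreover have "sum (err G1) p + sum (err G2) p + sum (err G3) p < e"
    using d1(2)[OF pp] d2(2)[OF pp] d3(2)[OF pp] fp by (auto simp: fine_Int)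
  ultimately show "\<bar>f l - f 0\<bar> \<le> integral {0..l} G3 + e" by linarith
qed

lemma ug_ineq_subpaths_finite:
  fixes u :: "'a::metric_space \<Rightarrow> ereal" and \<gamma> :: "real \<Rightarrow> 'a"
  assumes ac: "arclength_curve \<gamma> l" and g: "g \<in> borel_measurable borel"
    and fin: "line_integral \<gamma> l g < \<infinity>"
    and sub: "\<And>a b. 0 \<le> a \<Longrightarrow> a < b \<Longrightarrow> b \<le> l \<Longrightarrow> ug_ineq u g (\<lambda>t. \<gamma> (a + t)) (b - a)"
    and t: "0 \<le> t" "t \<le> l"
  shows "\<bar>u (\<gamma> t)\<bar> \<noteq> \<infinity>"
proof
  assume inf: "\<bar>u (\<gamma> t)\<bar> = \<infinity>"
  have l: "0 < l" and c: "continuous_on {0..l} \<gamma>" using ac unfolding arclength_curve_def by auto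
  define b where "b = (if t = 0 then l else t)"
  have b: "0 < b" "b \<le> l" "t = 0 \<or> t = b" using t l unfolding b_def by auto
  have "line_integral (\<lambda>s. \<gamma> (0 + s)) (b - 0) g = \<infinity>"
    using sub[of 0 b] b inf unfolding ug_ineq_def by auto
  moreover have "line_integral (\<lambda>s. \<gamma> (0 + s)) (b - 0) g \<le> line_integral \<gamma> l g"
    using line_integral_subpath_le[OF c g, of 0 b] b by simp
  ultimately show False using fin by simp
qed

lemma ug_ineq_subpaths_integral:
  fixes u :: "'a::metric_space \<Rightarrow> ereal" and \<gamma> :: "real \<Rightarrow> 'a"
  assumes ac: "arclength_curve \<gamma> l" and g: "g \<in> borel_measurable borel"
    and fin: "line_integral \<gamma> l g < \<infinity>"
    and sub: "\<And>a b. 0 \<le> a \<Longrightarrow> a < b \<Longrightarrow> b \<le> l \<Longrightarrow> ug_ineq u g (\<lambda>t. \<gamma> (a + t)) (b - a)"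
    and ab: "0 \<le> a" "a \<le> b" "b \<le> l"
  shows "\<bar>real_of_ereal (u (\<gamma> b)) - real_of_ereal (u (\<gamma> a))\<bar>
           \<le> integral {a..b} (\<lambda>s. enn2real (g (\<gamma> s)))"
proof (cases "a = b")
  case False
  have c: "continuous_on {0..l} \<gamma>" and l: "0 \<le> l" using ac unfolding arclength_curve_def by auto
  let ?N = "\<integral>\<^sup>+ s. g (\<gamma> s) * indicator {a..b} s \<partial>lborel"
  have N: "line_integral (\<lambda>t. \<gamma> (a + t)) (b - a) g = ?N"
    using line_integral_subpath[OF c l g ab(1,3)] .
  moreover have "line_integral (\<lambda>t. \<gamma> (a + t)) (b - a) g \<le> line_integral \<gamma> l g"
    using line_integral_subpath_le[OF c g ab] .
  ultimately have Nfin: "?N < \<infinity>" using fin by simp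
  have finite: "\<bar>u (\<gamma> a)\<bar> \<noteq> \<infinity>" "\<bar>u (\<gamma> b)\<bar> \<noteq> \<infinity>"
    using ug_ineq_subpaths_finite[OF ac g fin sub] ab by auto
  have "ennreal (real_of_ereal \<bar>u (\<gamma> a) - u (\<gamma> b)\<bar>) \<le> ?N"
    using sub[of a b] ab False finite N unfolding ug_ineq_def by simp
  then have "enn2real (ennreal (real_of_ereal \<bar>u (\<gamma> a) - u (\<gamma> b)\<bar>)) \<le> enn2real ?N"
    using Nfin by (intro enn2real_mono) (auto simp: less_top)
  then have "real_of_ereal \<bar>u (\<gamma> a) - u (\<gamma> b)\<bar> \<le> enn2real ?N"
    by (simp add: real_of_ereal_pos)
  moreover have "real_of_ereal \<bar>u (\<gamma> a) - u (\<gamma> b)\<bar>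
      = \<bar>real_of_ereal (u (\<gamma> b)) - real_of_ereal (u (\<gamma> a))\<bar>"
    using finite by (cases "u (\<gamma> a)"; cases "u (\<gamma> b)") auto
  ultimately show ?thesis
    using integral_unique[OF has_integral_along_curve[OF c l g ab(1,3) Nfin]] by simp
qed simp

lemma enn2real_min_le: "min (enn2real x) (enn2real y) \<le> enn2real (min x y)"
  by (cases "x = \<infinity>"; cases "y = \<infinity>") (auto simp: min_def enn2real_mono less_top)

lemma ug_ineq_min:
  fixes u :: "'a::metric_space \<Rightarrow> ereal" and \<gamma> :: "real \<Rightarrow> 'a"
  assumes ac: "arclength_curve \<gamma> l"
    and g1: "g1 \<in> borel_measurable borel" and g2: "g2 \<in> borel_measurable borel"
    and f1: "line_integral \<gamma> l g1 < \<infinity>" and f2: "line_integral \<gamma> l g2 < \<infinity>"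
    and s1: "\<And>a b. 0 \<le> a \<Longrightarrow> a < b \<Longrightarrow> b \<le> l \<Longrightarrow> ug_ineq u g1 (\<lambda>t. \<gamma> (a + t)) (b - a)"
    and s2: "\<And>a b. 0 \<le> a \<Longrightarrow> a < b \<Longrightarrow> b \<le> l \<Longrightarrow> ug_ineq u g2 (\<lambda>t. \<gamma> (a + t)) (b - a)"
  shows "ug_ineq u (\<lambda>y. min (g1 y) (g2 y)) \<gamma> l"
proof -
  have l: "0 \<le> l" and c: "continuous_on {0..l} \<gamma>" using ac unfolding arclength_curve_def by auto
  define f where "f t = real_of_ereal (u (\<gamma> t))" for t
  define G where "G h s = enn2real (h (\<gamma> s))" for h :: "'a \<Rightarrow> ennreal" and s
  let ?g = "\<lambda>y. min (g1 y) (g2 y)"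
  have integrable: "G h integrable_on {0..l}"
    if "h \<in> borel_measurable borel" "line_integral \<gamma> l h < \<infinity>" for h
    using has_integral_along_curve[OF c l that(1) order.refl order.refl] that(2)
    unfolding G_def line_integral_def by blast
  have m: "?g \<in> borel_measurable borel" using g1 g2 by measurable
  have LI: "line_integral \<gamma> l ?g < \<infinity>"
    using f1 unfolding line_integral_def
    by (rule le_less_trans[rotated]) (auto intro!: nn_integral_mono simp: indicator_def)
  have "\<bar>f l - f 0\<bar> \<le> integral {0..l} (G ?g)"
  proof (rule abs_diff_le_integral_of_min[OF l integrable[OF g1 f1] integrable[OF g2 f2] integrable[OF m LI]])
    show "min (G g1 t) (G g2 t) \<le> G ?g t" for t unfolding G_def by (rule enn2real_min_le)
    show "\<bar>f b - f a\<bar> \<le> integral {a..b} (G g1)" if "0 \<le> a" "a \<le> b" "b \<le> l" for a b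
      unfolding f_def G_def by (rule ug_ineq_subpaths_integral[OF ac g1 f1 s1 that])
    show "\<bar>f b - f a\<bar> \<le> integral {a..b} (G g2)" if "0 \<le> a" "a \<le> b" "b \<le> l" for a b
      unfolding f_def G_def by (rule ug_ineq_subpaths_integral[OF ac g2 f2 s2 that])
  qed
  also have "integral {0..l} (G ?g) = enn2real (line_integral \<gamma> l ?g)"
    using has_integral_along_curve[OF c l m order.refl order.refl] LI
    unfolding G_def line_integral_def by (blast intro: integral_unique)
  finally have "ennreal \<bar>f 0 - f l\<bar> \<le> ennreal (enn2real (line_integral \<gamma> l ?g))"
    by (simp add: abs_minus_commute ennreal_leI)
  also have "\<dots> = line_integral \<gamma> l ?g" using LI by (simp add: less_top)
  moreover have "\<bar>u (\<gamma> 0)\<bar> \<noteq> \<infinity>" "\<bar>u (\<gamma> l)\<bar> \<noteq> \<infinity>"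
    using ug_ineq_subpaths_finite[OF ac g1 f1 s1, of 0] ug_ineq_subpaths_finite[OF ac g1 f1 s1, of l] l
    by auto
  ultimately show ?thesis
    unfolding ug_ineq_def f_def by (cases "u (\<gamma> 0)"; cases "u (\<gamma> l)") auto
qed

section \<open>Families of curves of zero p-modulus\<close>

lemma p_modulus_eq_0_iff:
  "p_modulus M p \<Gamma> = 0 \<longleftrightarrow> (\<forall>e>0. \<exists>\<rho>. \<rho> \<in> borel_measurable borel \<and>
      (\<forall>(\<gamma>, l) \<in> \<Gamma>. 1 \<le> line_integral \<gamma> l \<rho>) \<and> (\<integral>\<^sup>+ y. epow (\<rho> y) p \<partial>M) < e)"
  unfolding p_modulus_def bot_ennreal[symmetric] INF_eq_bot_iff by (auto simp: bot_ennreal)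

lemma p_modulus_eq_0_mono:
  assumes "p_modulus M p \<Gamma> = 0"
    and "\<And>\<rho>. \<rho> \<in> borel_measurable borel \<Longrightarrow> (\<forall>(\<gamma>, l) \<in> \<Gamma>. 1 \<le> line_integral \<gamma> l \<rho>) \<Longrightarrow>
           (\<forall>(\<gamma>, l) \<in> \<Gamma>'. 1 \<le> line_integral \<gamma> l \<rho>)"
  shows "p_modulus M p \<Gamma>' = 0"
  using assms unfolding p_modulus_eq_0_iff by meson

lemma p_modulus_eq_0_subset:
  "p_modulus M p \<Gamma> = 0 \<Longrightarrow> \<Gamma>' \<subseteq> \<Gamma> \<Longrightarrow> p_modulus M p \<Gamma>' = 0"
  by (erule p_modulus_eq_0_mono) blast

lemma p_modulus_empty: "0 < p \<Longrightarrow> p_modulus M p {} = 0"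
  unfolding p_modulus_eq_0_iff by (intro allI impI exI[of _ "\<lambda>_. 0"]) auto

lemma ennreal_pos_exists_real_less:
  fixes e :: ennreal assumes "0 < e" shows "\<exists>d::real. 0 < d \<and> ennreal d < e"
proof -
  obtain x where x: "0 < x" "x < e" using dense[OF assms] by blast
  then have "x < \<infinity>" using top.not_eq_extremum by fastforce
  then show ?thesis using x by (intro exI[of _ "enn2real x"]) (auto simp: enn2real_positive_iff less_top)
qed

lemma small_multiple_less:
  fixes I e :: ennreal
  assumes "I < \<infinity>" "0 < e"
  shows "\<exists>c::real. 0 < c \<and> c \<le> 1 \<and> ennreal c * I < e"
proof -
  obtain d where d: "0 < d" "ennreal d < e" using ennreal_pos_exists_real_less[OF assms(2)] by blast
  define i where "i = enn2real I"
  have i: "I = ennreal i" "0 \<le> i" using assms(1) unfolding i_def by auto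
  define c where "c = min 1 (d / (i + 1))"
  have c: "0 < c" "c \<le> 1" using d i unfolding c_def by auto
  have "c * i \<le> d / (i + 1) * i" unfolding c_def using i by (intro mult_right_mono) auto
  also have "\<dots> < d" using d i by (simp add: field_simps)
  finally have "ennreal c * I < ennreal d"
    using i c d by (simp add: ennreal_mult[symmetric] ennreal_less_iff)
  then show ?thesis using c d by (intro exI[of _ c]) auto
qed

definition infinite_line_integral_curves ::
    "('a::metric_space \<Rightarrow> ennreal) \<Rightarrow> ((real \<Rightarrow> 'a) \<times> real) set" where
  "infinite_line_integral_curves g = {(\<gamma>, l). arclength_curve \<gamma> l \<and> line_integral \<gamma> l g = \<infinity>}"

text \<open>Scaling g by a small constant c keeps it admissible for this family while its
  p-energy, which is at most c times that of g, becomes arbitrarily small.\<close>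
lemma p_modulus_infinite_line_integral:
  assumes M: "mms_standing M" and p: "1 \<le> p" and g: "g \<in> borel_measurable borel"
    and fin: "(\<integral>\<^sup>+ y. epow (g y) p \<partial>M) < \<infinity>"
  shows "p_modulus M p (infinite_line_integral_curves g) = 0"
  unfolding p_modulus_eq_0_iff
proof (intro allI impI)
  fix e :: ennreal assume e: "0 < e"
  obtain c where c: "0 < c" "c \<le> 1" "ennreal c * (\<integral>\<^sup>+ y. epow (g y) p \<partial>M) < e"
    using small_multiple_less[OF fin e] by blast
  define \<rho> where "\<rho> y = ennreal c * g y" for y
  have "(\<integral>\<^sup>+ y. epow (\<rho> y) p \<partial>M) = (\<integral>\<^sup>+ y. ennreal (c powr p) * epow (g y) p \<partial>M)"
    unfolding \<rho>_def using c p by (simp add: epow_ennreal_mult)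
  also have "\<dots> = ennreal (c powr p) * (\<integral>\<^sup>+ y. epow (g y) p \<partial>M)"
    using borel_measurable_mms[OF M g] by (intro nn_integral_cmult) measurable
  also have "\<dots> \<le> ennreal c * (\<integral>\<^sup>+ y. epow (g y) p \<partial>M)"
  proof (intro mult_right_mono ennreal_leI)
    have "c powr p \<le> c powr 1" using c p by (intro powr_mono') auto
    then show "c powr p \<le> c" using c by simp
  qed simp
  finally have small: "(\<integral>\<^sup>+ y. epow (\<rho> y) p \<partial>M) < e" using c(3) by simp
  have "line_integral \<gamma> l \<rho> = \<infinity>" if "(\<gamma>, l) \<in> infinite_line_integral_curves g" for \<gamma> l
  proof -
    have cont: "continuous_on {0..l} \<gamma>" "0 \<le> l"
      using that unfolding infinite_line_integral_curves_def arclength_curve_def by auto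
    have "line_integral \<gamma> l \<rho> = ennreal c * line_integral \<gamma> l g"
      unfolding line_integral_def \<rho>_def mult.assoc
      by (rule nn_integral_cmult) (use borel_measurable_along_curve[OF cont g, of 0 l] in simp)
    then show ?thesis using that c unfolding infinite_line_integral_curves_def by (simp add: ennreal_mult_top)
  qed
  moreover have "\<rho> \<in> borel_measurable borel" unfolding \<rho>_def using g by measurable
  ultimately show "\<exists>\<rho>. \<rho> \<in> borel_measurable borel \<and>
      (\<forall>(\<gamma>, l) \<in> infinite_line_integral_curves g. 1 \<le> line_integral \<gamma> l \<rho>) \<and>
      (\<integral>\<^sup>+ y. epow (\<rho> y) p \<partial>M) < e"
    using small by auto
qed

lemma p_modulus_UN:
  fixes \<Gamma> :: "nat \<Rightarrow> ((real \<Rightarrow> 'a::metric_space) \<times> real) set"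
  assumes M: "mms_standing M" and p: "1 \<le> p" and z: "\<And>n. p_modulus M p (\<Gamma> n) = 0"
  shows "p_modulus M p (\<Union>n. \<Gamma> n) = 0"
  unfolding p_modulus_eq_0_iff
proof (intro allI impI)
  fix e :: ennreal assume e: "0 < e"
  obtain d where d: "0 < d" "ennreal d < e" using ennreal_pos_exists_real_less[OF e] by blast
  have "\<exists>\<rho>. \<rho> \<in> borel_measurable borel \<and> (\<forall>(\<gamma>, l) \<in> \<Gamma> n. 1 \<le> line_integral \<gamma> l \<rho>) \<and>
      (\<integral>\<^sup>+ y. epow (\<rho> y) p \<partial>M) < ennreal (d * (1/2)^Suc n)" for n
    using z[of n] d unfolding p_modulus_eq_0_iff by simp
  then obtain R where R: "\<And>n. R n \<in> borel_measurable borel"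
    "\<And>n. \<forall>(\<gamma>, l) \<in> \<Gamma> n. 1 \<le> line_integral \<gamma> l (R n)"
    "\<And>n. (\<integral>\<^sup>+ y. epow (R n y) p \<partial>M) < ennreal (d * (1/2)^Suc n)"
    by metis
  define \<rho> where "\<rho> y = (SUP n. R n y)" for y
  have \<rho>m: "\<rho> \<in> borel_measurable borel" unfolding \<rho>_def using R(1) by measurable
  have adm: "\<forall>(\<gamma>, l) \<in> (\<Union>n. \<Gamma> n). 1 \<le> line_integral \<gamma> l \<rho>"
  proof safe
    fix \<gamma> l n assume "(\<gamma>, l) \<in> \<Gamma> n"
    then have "1 \<le> line_integral \<gamma> l (R n)" using R(2) by blast
    also have "\<dots> \<le> line_integral \<gamma> l \<rho>" unfolding line_integral_def \<rho>_def
      by (intro nn_integral_mono mult_right_mono) (auto intro: SUP_upper)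
    finally show "1 \<le> line_integral \<gamma> l \<rho>" .
  qed
  have RM: "\<And>n. (\<lambda>y. epow (R n y) p) \<in> borel_measurable M" using borel_measurable_mms[OF M R(1)] by measurable
  have "(\<integral>\<^sup>+ y. epow (\<rho> y) p \<partial>M) \<le> (\<integral>\<^sup>+ y. (\<Sum>n. epow (R n y) p) \<partial>M)"
    unfolding \<rho>_def by (intro nn_integral_mono epow_SUP_le_suminf) (use p in auto)
  also have "\<dots> = (\<Sum>n. \<integral>\<^sup>+ y. epow (R n y) p \<partial>M)" by (rule nn_integral_suminf[OF RM])
  also have "\<dots> \<le> (\<Sum>n. ennreal (d * (1/2)^Suc n))"
    by (intro suminf_le less_imp_le[OF R(3)]) (auto intro: summableI)
  also have "\<dots> = ennreal d"
    using sums_mult[OF power_half_series, of d] d by (intro suminf_ennreal_eq) auto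
  finally have "(\<integral>\<^sup>+ y. epow (\<rho> y) p \<partial>M) < e" using d(2) by simp
  then show "\<exists>\<rho>. \<rho> \<in> borel_measurable borel \<and> (\<forall>(\<gamma>, l) \<in> (\<Union>n. \<Gamma> n). 1 \<le> line_integral \<gamma> l \<rho>) \<and>
      (\<integral>\<^sup>+ y. epow (\<rho> y) p \<partial>M) < e" using \<rho>m adm by blast
qed

lemma p_modulus_Un:
  assumes M: "mms_standing M" and p: "1 \<le> p" and "p_modulus M p A = 0" "p_modulus M p B = 0"
  shows "p_modulus M p (A \<union> B) = 0"
proof -
  have eq: "(\<Union>n. (if n = (0::nat) then A else B)) = A \<union> B" by (auto split: if_splits)
  have H: "p_modulus M p (\<Union>n. (if n = (0::nat) then A else B)) = 0"
    by (rule p_modulus_UN[OF M p]) (use assms in auto)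
  show ?thesis using H[unfolded eq] .
qed

definition curves_with_subpath_in :: "((real \<Rightarrow> 'a) \<times> real) set \<Rightarrow> ((real \<Rightarrow> 'a::metric_space) \<times> real) set" where
  "curves_with_subpath_in \<Gamma> = {(\<gamma>, l). arclength_curve \<gamma> l \<and>
     (\<exists>a b. 0 \<le> a \<and> a < b \<and> b \<le> l \<and> ((\<lambda>t. \<gamma> (a + t)), b - a) \<in> \<Gamma>)}"

lemma p_modulus_curves_with_subpath_in:
  assumes "p_modulus M p \<Gamma> = 0" shows "p_modulus M p (curves_with_subpath_in \<Gamma>) = 0"
proof (rule p_modulus_eq_0_mono[OF assms])
  fix \<rho> :: "'a \<Rightarrow> ennreal" assume \<rho>: "\<rho> \<in> borel_measurable borel" "\<forall>(\<gamma>, l) \<in> \<Gamma>. 1 \<le> line_integral \<gamma> l \<rho>"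
  show "\<forall>(\<gamma>, l) \<in> curves_with_subpath_in \<Gamma>. 1 \<le> line_integral \<gamma> l \<rho>"
  proof (clarsimp simp: curves_with_subpath_in_def)
    fix \<gamma> l a b assume ac: "arclength_curve \<gamma> l" and ab: "0 \<le> a" "a < b" "b \<le> l"
      and inG: "((\<lambda>t. \<gamma> (a + t)), b - a) \<in> \<Gamma>"
    have c: "continuous_on {0..l} \<gamma>" "0 \<le> l" using ac unfolding arclength_curve_def by auto
    have "1 \<le> line_integral (\<lambda>t. \<gamma> (a + t)) (b - a) \<rho>" using \<rho>(2) inG by blast
    also have "\<dots> \<le> line_integral \<gamma> l \<rho>" using line_integral_subpath_le[OF c(1) \<rho>(1)] ab by simp
    finally show "1 \<le> line_integral \<gamma> l \<rho>" .
  qed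
qed

section \<open>Minimal p-weak upper gradients\<close>

definition ug_failures :: "('a::metric_space \<Rightarrow> ereal) \<Rightarrow> ('a \<Rightarrow> ennreal) \<Rightarrow> ((real \<Rightarrow> 'a) \<times> real) set" where
  "ug_failures u g = {(\<gamma>, l). arclength_curve \<gamma> l \<and> \<not> ug_ineq u g \<gamma> l}"

lemma p_weak_ug_iff: "p_weak_ug M p u g \<longleftrightarrow> g \<in> borel_measurable borel \<and> p_modulus M p (ug_failures u g) = 0"
  unfolding p_weak_ug_def ug_failures_def ..

lemma p_weak_ug_min:
  assumes M: "mms_standing M" and p: "1 \<le> p"
    and w1: "p_weak_ug M p u g1" and w2: "p_weak_ug M p u g2"
    and e1: "(\<integral>\<^sup>+ y. epow (g1 y) p \<partial>M) < \<infinity>" and e2: "(\<integral>\<^sup>+ y. epow (g2 y) p \<partial>M) < \<infinity>"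
  shows "p_weak_ug M p u (\<lambda>y. min (g1 y) (g2 y))"
proof -
  let ?g = "\<lambda>y. min (g1 y) (g2 y)"
  let ?N = "curves_with_subpath_in (ug_failures u g1) \<union> curves_with_subpath_in (ug_failures u g2)
    \<union> infinite_line_integral_curves g1 \<union> infinite_line_integral_curves g2"
  have m: "g1 \<in> borel_measurable borel" "g2 \<in> borel_measurable borel"
    using w1 w2 unfolding p_weak_ug_iff by auto
  have null: "p_modulus M p ?N = 0"
    using w1 w2 p_modulus_infinite_line_integral[OF M p m(1) e1] p_modulus_infinite_line_integral[OF M p m(2) e2]
    by (intro p_modulus_Un[OF M p] p_modulus_curves_with_subpath_in) (auto simp: p_weak_ug_iff)
  have "x \<in> ?N" if bad: "x \<in> ug_failures u ?g" for x
  proof (rule ccontr)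
    assume good: "x \<notin> ?N"
    obtain \<gamma> l where x: "x = (\<gamma>, l)" by (cases x)
    then have ac: "arclength_curve \<gamma> l" using bad unfolding ug_failures_def by auto
    have "line_integral \<gamma> l g1 < \<infinity>" "line_integral \<gamma> l g2 < \<infinity>"
      using good ac unfolding x infinite_line_integral_curves_def by (auto simp: less_top)
    moreover have "ug_ineq u g1 (\<lambda>t. \<gamma> (a + t)) (b - a)" "ug_ineq u g2 (\<lambda>t. \<gamma> (a + t)) (b - a)"
      if "0 \<le> a" "a < b" "b \<le> l" for a b
      using good ac that arclength_curve_subpath[OF ac that]
      unfolding x curves_with_subpath_in_def ug_failures_def by auto
    ultimately have "ug_ineq u ?g \<gamma> l" using ug_ineq_min[OF ac m] by blast
    then show False using bad unfolding x ug_failures_def by simp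
  qed
  then have "ug_failures u ?g \<subseteq> ?N" by blast
  moreover have "?g \<in> borel_measurable borel" using m by measurable
  ultimately show ?thesis unfolding p_weak_ug_iff using p_modulus_eq_0_subset[OF null] by blast
qed

lemma AE_le_of_nn_integral_eq:
  fixes f h :: "'a \<Rightarrow> ennreal"
  assumes "f \<in> borel_measurable M" "h \<in> borel_measurable M" "\<And>y. f y \<le> h y"
    "integral\<^sup>N M h < \<infinity>" "integral\<^sup>N M f = integral\<^sup>N M h"
  shows "AE y in M. h y \<le> f y"
proof -
  have "(\<integral>\<^sup>+ y. h y - f y \<partial>M) = integral\<^sup>N M h - integral\<^sup>N M f"
    by (rule nn_integral_diff) (use assms in \<open>auto simp: less_top\<close>)
  also have "\<dots> = 0" using assms by (simp add: less_top)
  finally have "AE y in M. h y - f y = 0"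
    by (subst nn_integral_0_iff_AE[symmetric]) (use assms in measurable)
  then show ?thesis by (auto elim: AE_mp intro: ennreal_minus_eq_0)
qed

lemma p_weak_ug_INF:
  assumes M: "mms_standing M" and p: "1 \<le> p"
    and ug: "\<And>n. p_weak_ug M p u (h n)" and dec: "\<And>n y. h (Suc n) y \<le> h n y"
    and fin: "(\<integral>\<^sup>+ y. epow (h 0 y) p \<partial>M) < \<infinity>"
  shows "p_weak_ug M p u (\<lambda>y. INF n. h n y)"
proof -
  define g where "g y = (INF n. h n y)" for y
  have hm: "h n \<in> borel_measurable borel" for n using ug unfolding p_weak_ug_iff by auto
  have null: "p_modulus M p ((\<Union>n. ug_failures u (h n)) \<union> infinite_line_integral_curves (h 0)) = 0"
    using ug p_modulus_infinite_line_integral[OF M p hm fin]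
    by (intro p_modulus_Un[OF M p] p_modulus_UN[OF M p]) (auto simp: p_weak_ug_iff)
  have "ug_failures u g \<subseteq> (\<Union>n. ug_failures u (h n)) \<union> infinite_line_integral_curves (h 0)"
  proof (clarify)
    fix \<gamma> l assume bad: "(\<gamma>, l) \<in> ug_failures u g"
      and good: "(\<gamma>, l) \<notin> infinite_line_integral_curves (h 0)"
    then have c: "continuous_on {0..l} \<gamma>" "0 \<le> l" and fin0: "line_integral \<gamma> l (h 0) < \<infinity>"
      unfolding ug_failures_def infinite_line_integral_curves_def arclength_curve_def
      by (auto simp: less_top)
    show "(\<gamma>, l) \<in> (\<Union>n. ug_failures u (h n))"
    proof (rule ccontr)
      assume "(\<gamma>, l) \<notin> (\<Union>n. ug_failures u (h n))"
      then have ug_n: "ug_ineq u (h n) \<gamma> l" for n using bad unfolding ug_failures_def by auto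
      have "line_integral \<gamma> l g = (INF n. line_integral \<gamma> l (h n))"
        unfolding line_integral_def g_def
      proof (subst nn_integral_monotone_convergence_INF_AE'[symmetric])
        show "AE t in lborel. h (Suc n) (\<gamma> t) * indicator {0..l} t \<le> h n (\<gamma> t) * indicator {0..l} t" for n
          using dec by (intro AE_I2 mult_right_mono) auto
        show "(\<lambda>t. h n (\<gamma> t) * indicator {0..l} t) \<in> borel_measurable lborel" for n
          using borel_measurable_along_curve[OF c hm[of n], of 0 l] by simp
        show "(\<integral>\<^sup>+ t. h 0 (\<gamma> t) * indicator {0..l} t \<partial>lborel) < \<infinity>"
          using fin0 unfolding line_integral_def .
      qed (auto intro!: nn_integral_cong simp: indicator_def)
      then have "ug_ineq u g \<gamma> l"
        using ug_n ug_n[of 0] fin0 unfolding ug_ineq_def by (auto simp: le_INF_iff split: if_splits)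
      then show False using bad unfolding ug_failures_def by simp
    qed
  qed
  moreover have "g \<in> borel_measurable borel" unfolding g_def using hm by measurable
  ultimately show ?thesis
    unfolding p_weak_ug_iff g_def[symmetric] using p_modulus_eq_0_subset[OF null] by blast
qed

lemma minimal_pwugI:
  assumes M: "mms_standing M" and p: "1 \<le> p"
    and g0: "p_weak_ug M p u g0" "(\<integral>\<^sup>+ y. epow (g0 y) p \<partial>M) < \<infinity>"
    and least: "\<And>g. p_weak_ug M p u g \<Longrightarrow> (\<integral>\<^sup>+ y. epow (g y) p \<partial>M) < \<infinity> \<Longrightarrow>
      (\<integral>\<^sup>+ y. epow (g0 y) p \<partial>M) \<le> (\<integral>\<^sup>+ y. epow (min (g0 y) (g y)) p \<partial>M)"
  shows "minimal_pwug M p u g0"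
  unfolding minimal_pwug_def
proof (intro conjI allI impI g0)
  fix g assume g: "p_weak_ug M p u g \<and> (\<integral>\<^sup>+ y. epow (g y) p \<partial>M) < \<infinity>"
  have [measurable]: "g0 \<in> borel_measurable M" "g \<in> borel_measurable M"
    using borel_measurable_mms[OF M] g0(1) g unfolding p_weak_ug_def by auto
  have "AE y in M. epow (g0 y) p \<le> epow (min (g0 y) (g y)) p"
  proof (rule AE_le_of_nn_integral_eq)
    show "epow (min (g0 y) (g y)) p \<le> epow (g0 y) p" for y using p by (intro epow_mono) auto
    then have "(\<integral>\<^sup>+ y. epow (min (g0 y) (g y)) p \<partial>M) \<le> (\<integral>\<^sup>+ y. epow (g0 y) p \<partial>M)"
      by (intro nn_integral_mono)
    then show "(\<integral>\<^sup>+ y. epow (min (g0 y) (g y)) p \<partial>M) = (\<integral>\<^sup>+ y. epow (g0 y) p \<partial>M)"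
      using least g by (intro antisym) auto
  qed (use g0 in auto)
  then show "AE y in M. g0 y \<le> g y"
  proof (rule AE_mp, intro AE_I2 impI)
    fix y assume le: "epow (g0 y) p \<le> epow (min (g0 y) (g y)) p"
    show "g0 y \<le> g y"
    proof (rule ccontr)
      assume "\<not> g0 y \<le> g y"
      then have "epow (min (g0 y) (g y)) p < epow (g0 y) p"
        using p by (intro epow_strict_mono) (auto simp: min_def)
      then show False using le by simp
    qed
  qed
qed

primrec running_min :: "(nat \<Rightarrow> 'a \<Rightarrow> ennreal) \<Rightarrow> nat \<Rightarrow> 'a \<Rightarrow> ennreal" where
  "running_min gs 0 = gs 0"
| "running_min gs (Suc n) = (\<lambda>y. min (running_min gs n y) (gs (Suc n) y))"

lemma running_min_le: "running_min gs n y \<le> gs n y"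
  by (cases n) auto

lemma decreasing_minimizing_sequence:
  fixes E :: "('a \<Rightarrow> ennreal) \<Rightarrow> ennreal"
  assumes G_min: "\<And>f g. f \<in> G \<Longrightarrow> g \<in> G \<Longrightarrow> (\<lambda>y. min (f y) (g y)) \<in> G"
    and E_mono: "\<And>f g. (\<And>y. f y \<le> g y) \<Longrightarrow> E f \<le> E g"
    and fin: "(INF g\<in>G. E g) < \<infinity>"
  obtains h where "\<And>n. h n \<in> G" "\<And>n y. h (Suc n) y \<le> h n y"
    "E (\<lambda>y. INF n. h n y) \<le> (INF g\<in>G. E g)"
proof -
  define I where "I = (INF g\<in>G. E g)"
  have "\<exists>g\<in>G. E g < I + ennreal (1 / Suc n)" for n
  proof -
    have "I < I + ennreal (1 / Suc n)"
      using fin unfolding I_def[symmetric] by (simp add: ennreal_add_left_cancel_less less_top)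
    then show ?thesis unfolding I_def by (simp add: INF_less_iff)
  qed
  then obtain gs where gs: "\<And>n. gs n \<in> G" "\<And>n. E (gs n) < I + ennreal (1 / Suc n)" by metis
  define h where "h = running_min gs"
  have "h n \<in> G" for n unfolding h_def by (induct n) (auto intro: G_min gs)
  moreover have "h (Suc n) y \<le> h n y" for n y unfolding h_def by simp
  moreover have "E (\<lambda>y. INF n. h n y) \<le> I"
  proof (rule ennreal_le_epsilon)
    fix e :: real assume "0 < e"
    then obtain n where n: "1 / real (Suc n) < e" by (metis nat_approx_posE)
    have "(INF n. h n y) \<le> gs n y" for y
      using INF_lower[of n UNIV "\<lambda>n. h n y"] running_min_le[of gs n y] unfolding h_def by simp
    then have "E (\<lambda>y. INF n. h n y) \<le> E (gs n)" by (rule E_mono)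
    also have "\<dots> \<le> I + ennreal (1 / Suc n)" using gs(2)[of n] by simp
    also have "\<dots> \<le> I + ennreal e" using n by (intro add_left_mono ennreal_leI) simp
    finally show "E (\<lambda>y. INF n. h n y) \<le> I + ennreal e" .
  qed
  ultimately show ?thesis using that unfolding I_def by blast
qed

lemma minimal_pwug_exists:
  assumes M: "mms_standing M" and p: "1 \<le> p" and u: "u \<in> newtonian M p"
  shows "\<exists>g. minimal_pwug M p u g"
proof -
  define E where "E g = (\<integral>\<^sup>+ y. epow (g y) p \<partial>M)" for g :: "'a \<Rightarrow> ennreal"
  define G where "G = {g. p_weak_ug M p u g \<and> E g < \<infinity>}"
  have E_mono: "E f \<le> E g" if "\<And>y. f y \<le> g y" for f g
    unfolding E_def by (intro nn_integral_mono epow_mono) (use that p in auto)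
  have G_min: "(\<lambda>y. min (f y) (g y)) \<in> G" if "f \<in> G" "g \<in> G" for f g
    using p_weak_ug_min[OF M p, of u f g] E_mono[of "\<lambda>y. min (f y) (g y)" g] that
    unfolding G_def E_def by auto
  obtain g where "g \<in> G" using u unfolding newtonian_def G_def E_def by auto
  then have fin: "(INF g\<in>G. E g) < \<infinity>"
    using le_less_trans[OF INF_lower[of g G E]] unfolding G_def by auto
  obtain h where hG: "\<And>n. h n \<in> G" and dec: "\<And>n y. h (Suc n) y \<le> h n y"
    and min: "E (\<lambda>y. INF n. h n y) \<le> (INF g\<in>G. E g)"
    using decreasing_minimizing_sequence[of G E, OF G_min E_mono fin] by blast
  define g0 where "g0 y = (INF n. h n y)" for y
  have "p_weak_ug M p u g0"
    unfolding g0_def using hG dec by (intro p_weak_ug_INF[OF M p]) (auto simp: G_def E_def)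
  then have "g0 \<in> G" using min fin unfolding G_def g0_def by auto
  show ?thesis
  proof (intro exI minimal_pwugI[OF M p])
    show "p_weak_ug M p u g0" "(\<integral>\<^sup>+ y. epow (g0 y) p \<partial>M) < \<infinity>"
      using \<open>g0 \<in> G\<close> unfolding G_def E_def by auto
    show "(\<integral>\<^sup>+ y. epow (g0 y) p \<partial>M) \<le> (\<integral>\<^sup>+ y. epow (min (g0 y) (g y)) p \<partial>M)"
      if "p_weak_ug M p u g" "(\<integral>\<^sup>+ y. epow (g y) p \<partial>M) < \<infinity>" for g
      using INF_lower[OF G_min[OF \<open>g0 \<in> G\<close>, of g]] min that
      unfolding G_def E_def g0_def by (auto intro: order_trans)
  qed
qed

section \<open>Capacity of balls\<close>

lemma first_last_exit:
  fixes \<gamma> :: "real \<Rightarrow> 'a::topological_space"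
  assumes c: "continuous_on {0..l} \<gamma>" and S: "open S" and exit: "t \<in> {0..l}" "\<gamma> t \<notin> S"
  obtains a b where "0 \<le> a" "a \<le> b" "b \<le> l" "\<gamma> a \<notin> S" "\<gamma> b \<notin> S"
    "\<And>t. t \<in> {0..<a} \<union> {b<..l} \<Longrightarrow> \<gamma> t \<in> S"
proof -
  define Z where "Z = {0..l} \<inter> \<gamma> -` (- S)"
  have ne: "Z \<noteq> {}" using exit unfolding Z_def by auto
  have "closed Z" unfolding Z_def by (rule continuous_closed_preimage[OF c]) (use S in auto)
  moreover have bdd: "bdd_below Z" "bdd_above Z" unfolding Z_def by (auto intro: bdd_belowI bdd_aboveI)
  ultimately have Z: "Inf Z \<in> Z" "Sup Z \<in> Z" using closed_contains_Inf closed_contains_Sup ne by auto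
  show ?thesis
  proof (rule that[of "Inf Z" "Sup Z"])
    show "0 \<le> Inf Z" "Inf Z \<le> Sup Z" "Sup Z \<le> l" "\<gamma> (Inf Z) \<notin> S" "\<gamma> (Sup Z) \<notin> S"
      using Z cInf_le_cSup[OF ne bdd(2,1)] unfolding Z_def by auto
    show "\<gamma> t \<in> S" if t: "t \<in> {0..<Inf Z} \<union> {Sup Z<..l}" for t
    proof (rule ccontr)
      assume "\<gamma> t \<notin> S"
      moreover have "0 \<le> t" "t \<le> l" using t Z unfolding Z_def by auto
      ultimately have "t \<in> Z" unfolding Z_def by auto
      then show False using t cInf_lower[OF _ bdd(1), of t] cSup_upper[OF _ bdd(2), of t] by auto
    qed
  qed
qed

text \<open>If \<gamma> leaves S, then \<phi> vanishes at the first and the last exit point, so the change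
  of \<phi> is bounded by L times the length of the pieces before and after them.\<close>
lemma lipschitz_change_along_curve:
  fixes \<phi> :: "'a::metric_space \<Rightarrow> real" and \<gamma> :: "real \<Rightarrow> 'a"
  assumes lip: "\<And>y z. \<bar>\<phi> y - \<phi> z\<bar> \<le> L * dist y z" and L: "0 \<le> L"
    and supp: "\<And>y. y \<notin> S \<Longrightarrow> \<phi> y = 0" and S: "open S" and ac: "arclength_curve \<gamma> l"
  obtains a b where "0 \<le> a" "a \<le> b" "b \<le> l" "\<And>t. t \<in> {0..<a} \<union> {b<..l} \<Longrightarrow> \<gamma> t \<in> S"
    and "\<bar>\<phi> (\<gamma> 0) - \<phi> (\<gamma> l)\<bar> \<le> L * (a + (l - b))"
proof -
  have l: "0 < l" and c: "continuous_on {0..l} \<gamma>" using ac unfolding arclength_curve_def by auto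
  have step: "\<bar>\<phi> (\<gamma> t') - \<phi> (\<gamma> t)\<bar> \<le> L * (t' - t)" if "0 \<le> t" "t \<le> t'" "t' \<le> l" for t t'
    using lip[of "\<gamma> t'" "\<gamma> t"] arclength_curve_dist_le[OF ac that] L
    by (simp add: dist_commute) (meson mult_left_mono order_trans)
  show ?thesis
  proof (cases "\<forall>t\<in>{0..l}. \<gamma> t \<in> S")
    case True
    then show ?thesis using step[of 0 l] l by (intro that[of l l]) (auto simp: abs_minus_commute)
  next
    case False
    then obtain a b where ab: "0 \<le> a" "a \<le> b" "b \<le> l" "\<gamma> a \<notin> S" "\<gamma> b \<notin> S"
      "\<And>t. t \<in> {0..<a} \<union> {b<..l} \<Longrightarrow> \<gamma> t \<in> S"
      using first_last_exit[OF c S] by blast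
    then show ?thesis
      using step[of 0 a] step[of b l] supp[of "\<gamma> a"] supp[of "\<gamma> b"]
      by (intro that[of a b]) (auto simp: distrib_left)
  qed
qed

lemma line_integral_indicator_ge:
  assumes "0 \<le> L" "0 \<le> a" "a \<le> b" "b \<le> l" and in_S: "\<And>t. t \<in> {0..<a} \<union> {b<..l} \<Longrightarrow> \<gamma> t \<in> S"
  shows "ennreal (L * (a + (l - b))) \<le> line_integral \<gamma> l (\<lambda>y. ennreal L * indicator S y)"
proof -
  have "{b<..l} - {0..<a} = {b<..l}" using assms(3) by auto
  then have "ennreal (L * (a + (l - b))) = (\<integral>\<^sup>+ t. ennreal L * indicator ({0..<a} \<union> {b<..l}) t \<partial>lborel)"
    using assms(1-4) by (simp add: nn_integral_cmult ennreal_mult emeasure_Un)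
  also have "\<dots> \<le> line_integral \<gamma> l (\<lambda>y. ennreal L * indicator S y)"
    unfolding line_integral_def mult.assoc
    by (intro nn_integral_mono mult_left_mono) (use in_S assms(2-4) in \<open>auto simp: indicator_def\<close>)
  finally show ?thesis .
qed

lemma ug_ineq_lipschitz_cutoff:
  fixes \<phi> :: "'a::metric_space \<Rightarrow> real" and \<gamma> :: "real \<Rightarrow> 'a"
  assumes "\<And>y z. \<bar>\<phi> y - \<phi> z\<bar> \<le> L * dist y z" "0 \<le> L"
    and "\<And>y. y \<notin> S \<Longrightarrow> \<phi> y = 0" "open S" "arclength_curve \<gamma> l"
  shows "ug_ineq (\<lambda>y. ereal (\<phi> y)) (\<lambda>y. ennreal L * indicator S y) \<gamma> l"
proof -
  obtain a b where ab: "0 \<le> a" "a \<le> b" "b \<le> l" "\<And>t. t \<in> {0..<a} \<union> {b<..l} \<Longrightarrow> \<gamma> t \<in> S"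
    and change: "\<bar>\<phi> (\<gamma> 0) - \<phi> (\<gamma> l)\<bar> \<le> L * (a + (l - b))"
    using lipschitz_change_along_curve[OF assms] by blast
  have "ennreal \<bar>\<phi> (\<gamma> 0) - \<phi> (\<gamma> l)\<bar> \<le> ennreal (L * (a + (l - b)))"
    using change by (rule ennreal_leI)
  also have "\<dots> \<le> line_integral \<gamma> l (\<lambda>y. ennreal L * indicator S y)"
    using line_integral_indicator_ge[OF \<open>0 \<le> L\<close> ab] .
  finally show ?thesis unfolding ug_ineq_def by simp
qed

lemma cap_p_le_energy:
  assumes M: "mms_standing M" and p: "1 \<le> p" and u: "u \<in> newtonian M p"
    and zero: "\<And>y. y \<notin> \<Omega> \<Longrightarrow> u y = 0" and one: "\<And>y. y \<in> E \<Longrightarrow> 1 \<le> u y"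
    and g: "p_weak_ug M p u g" "(\<integral>\<^sup>+ y. epow (g y) p \<partial>M) < \<infinity>"
  shows "cap_p M p E \<Omega> \<le> (\<integral>\<^sup>+ y. epow (g y) p \<partial>M)"
proof -
  define g\<^sub>u where "g\<^sub>u = (SOME g. minimal_pwug M p u g)"
  have "minimal_pwug M p u g\<^sub>u"
    unfolding g\<^sub>u_def using minimal_pwug_exists[OF M p u] by (rule someI_ex)
  then have ae: "AE y in M. g\<^sub>u y \<le> g y" using g unfolding minimal_pwug_def by blast
  have "cap_p M p E \<Omega> \<le> (\<integral>\<^sup>+ y. epow (g\<^sub>u y) p * indicator \<Omega> y \<partial>M)"
    unfolding cap_p_def g\<^sub>u_def by (rule INF_lower) (use u zero one in blast)
  also have "\<dots> \<le> (\<integral>\<^sup>+ y. epow (g y) p \<partial>M)"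
  proof (rule nn_integral_mono_AE)
    show "AE y in M. epow (g\<^sub>u y) p * indicator \<Omega> y \<le> epow (g y) p"
      using ae by eventually_elim (use p in \<open>auto simp: indicator_def intro: epow_mono\<close>)
  qed
  finally show ?thesis .
qed

lemma lipschitz_cutoff_newtonian:
  fixes \<phi> :: "'a::metric_space \<Rightarrow> real"
  assumes M: "mms_standing M" and p: "1 \<le> p" and L: "0 < L"
    and lip: "\<And>y z. \<bar>\<phi> y - \<phi> z\<bar> \<le> L * dist y z" and cont: "continuous_on UNIV \<phi>"
    and supp: "\<And>y. y \<notin> S \<Longrightarrow> \<phi> y = 0" and bounds: "\<And>y. 0 \<le> \<phi> y \<and> \<phi> y \<le> 1"
    and S: "open S" "emeasure M S < \<infinity>"
  shows "(\<lambda>y. ereal (\<phi> y)) \<in> newtonian M p"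
    and "p_weak_ug M p (\<lambda>y. ereal (\<phi> y)) (\<lambda>y. ennreal L * indicator S y)"
    and "(\<integral>\<^sup>+ y. epow (ennreal L * indicator S y) p \<partial>M) = ennreal (L powr p) * emeasure M S"
proof -
  let ?u = "\<lambda>y. ereal (\<phi> y)" and ?g = "\<lambda>y. ennreal L * indicator S y"
  have SM: "S \<in> sets M" using M S(1) unfolding mms_standing_def by auto
  have "ug_ineq ?u ?g \<gamma> l" if "arclength_curve \<gamma> l" for \<gamma> l
    using L lip supp S that by (intro ug_ineq_lipschitz_cutoff) auto
  then have "ug_failures ?u ?g = {}" unfolding ug_failures_def by auto
  moreover have "?g \<in> borel_measurable borel"
    using S by (intro borel_measurable_times_ennreal borel_measurable_indicator) auto
  ultimately show pw: "p_weak_ug M p ?u ?g"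
    unfolding p_weak_ug_iff using p_modulus_empty[of p M] p by simp
  have "epow (indicator S y) p = indicator S y" for y
    using p by (simp add: indicator_def)
  then show energy: "(\<integral>\<^sup>+ y. epow (?g y) p \<partial>M) = ennreal (L powr p) * emeasure M S"
    using L p by (simp add: epow_ennreal_mult nn_integral_cmult_indicator[OF SM])
  have "epow (e2ennreal \<bar>?u y\<bar>) p \<le> indicator S y" for y
    using bounds[of y] supp[of y] p powr_le1[of p "\<phi> y"] by (auto simp: epow_ennreal indicator_def)
  then have "(\<integral>\<^sup>+ y. epow (e2ennreal \<bar>?u y\<bar>) p \<partial>M) \<le> (\<integral>\<^sup>+ y. indicator S y \<partial>M)"
    by (intro nn_integral_mono)
  also have "\<dots> = emeasure M S" using SM by simp
  moreover have "?u \<in> borel_measurable M"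
    using borel_measurable_mms[OF M borel_measurable_continuous_onI[OF cont]] by measurable
  ultimately show "?u \<in> newtonian M p"
    unfolding newtonian_def using pw energy S(2) by (auto simp: ennreal_mult_less_top le_less_trans)
qed

lemma clamp01_diff_le: "\<bar>min 1 (max 0 (\<alpha>::real)) - min 1 (max 0 \<beta>)\<bar> \<le> \<bar>\<alpha> - \<beta>\<bar>"
  by (auto simp: min_def max_def abs_if)

lemma cap_p_ball_le:
  fixes M :: "'a::metric_space measure"
  assumes M: "mms_standing M" and p: "1 \<le> p" and r: "0 < r" and rs: "r < s" and sR: "s \<le> R"
  shows "cap_p M p (ball x r) (ball x R) \<le> ennreal (measure M (ball x s) / (s - r) powr p)"
proof -
  define L where "L = 1 / (s - r)"
  have L: "0 < L" using rs unfolding L_def by simp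
  define \<phi> where "\<phi> y = min 1 (max 0 (L * (s - dist x y)))" for y
  have lip: "\<bar>\<phi> y - \<phi> z\<bar> \<le> L * dist y z" for y z
  proof -
    have "\<bar>\<phi> y - \<phi> z\<bar> \<le> L * \<bar>dist x z - dist x y\<bar>"
      using clamp01_diff_le[of "L * (s - dist x y)" "L * (s - dist x z)"] L
      unfolding \<phi>_def by (simp add: abs_mult right_diff_distrib[symmetric])
    also have "\<dots> \<le> L * dist y z"
      using L dist_triangle[of x z y] dist_triangle[of x y z]
      by (intro mult_left_mono) (auto simp: dist_commute abs_le_iff)
    finally show ?thesis .
  qed
  have supp: "\<phi> y = 0" if "y \<notin> ball x s" for y
    using that L unfolding \<phi>_def by (simp add: mult_nonneg_nonpos)
  have one: "\<phi> y = 1" if "y \<in> ball x r" for y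
  proof -
    have "1 = L * (s - r)" unfolding L_def using rs by simp
    also have "\<dots> \<le> L * (s - dist x y)" using that L by (intro mult_left_mono) auto
    finally show ?thesis unfolding \<phi>_def by simp
  qed
  have cont: "continuous_on UNIV \<phi>" unfolding \<phi>_def by (intro continuous_intros)
  have bounds: "0 \<le> \<phi> y \<and> \<phi> y \<le> 1" for y unfolding \<phi>_def by auto
  have ball: "emeasure M (ball x s) < \<infinity>" using M rs r unfolding mms_standing_def by auto
  note cutoff = lipschitz_cutoff_newtonian[where S="ball x s", OF M p L lip cont supp bounds open_ball ball]
  have "cap_p M p (ball x r) (ball x R)
      \<le> (\<integral>\<^sup>+ y. epow (ennreal L * indicator (ball x s) y) p \<partial>M)"
    by (rule cap_p_le_energy[OF M p cutoff(1) _ _ cutoff(2)])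
      (use supp one sR cutoff(3) ball in \<open>auto simp: ennreal_mult_less_top\<close>)
  also have "\<dots> = ennreal (L powr p) * emeasure M (ball x s)" by (rule cutoff(3))
  also have "\<dots> = ennreal (measure M (ball x s) / (s - r) powr p)"
    using ball rs unfolding L_def
    by (simp add: emeasure_eq_ennreal_measure less_top ennreal_mult[symmetric] powr_divide divide_simps)
  finally show ?thesis .
qed

lemma le_if_ennreal_le_le_ennreal: "ennreal a \<le> c \<Longrightarrow> c \<le> ennreal b \<Longrightarrow> 0 \<le> b \<Longrightarrow> a \<le> b"
  using order_trans ennreal_le_iff by metis

lemma cap_p_ball_le_outer:
  assumes M: "mms_standing M" and p: "1 \<le> p" and r: "0 < r" "2 * r \<le> R"
  shows "cap_p M p (ball x r) (ball x R) \<le> ennreal (2 powr p * measure M (ball x R) / R powr p)"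
proof -
  have "cap_p M p (ball x r) (ball x R) \<le> ennreal (measure M (ball x R) / (R - r) powr p)"
    using cap_p_ball_le[OF M p r(1)] r by simp
  also have "\<dots> \<le> ennreal (2 powr p * measure M (ball x R) / R powr p)"
  proof (rule ennreal_leI)
    have "R powr p / 2 powr p = (R / 2) powr p" using r by (simp add: powr_divide)
    also have "\<dots> \<le> (R - r) powr p" using r p by (intro powr_mono2) auto
    finally have "measure M (ball x R) / (R - r) powr p \<le> measure M (ball x R) / (R powr p / 2 powr p)"
      using r by (intro divide_left_mono) auto
    then show "measure M (ball x R) / (R - r) powr p \<le> 2 powr p * measure M (ball x R) / R powr p"
      by (simp add: mult.commute)
  qed
  finally show ?thesis .
qed

lemma cap_p_ball_le_inner:
  assumes M: "mms_standing M" and p: "1 \<le> p" and r: "0 < r" "2 * r \<le> R"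
    and dbl: "measure M (ball x (2 * r)) \<le> D * measure M (ball x r)"
  shows "cap_p M p (ball x r) (ball x R) \<le> ennreal (D * measure M (ball x r) / r powr p)"
proof -
  have "cap_p M p (ball x r) (ball x R) \<le> ennreal (measure M (ball x (2 * r)) / (2 * r - r) powr p)"
    using cap_p_ball_le[OF M p r(1), of "2 * r" R] r by simp
  also have "\<dots> \<le> ennreal (D * measure M (ball x r) / r powr p)"
    using dbl r by (intro ennreal_leI) (simp add: divide_right_mono)
  finally show ?thesis .
qed

lemma measure_ball_pos:
  assumes "mms_standing M" "0 < r"
  shows "0 < measure M (ball x r)"
  using assms unfolding mms_standing_def measure_def by (simp add: enn2real_positive_iff)

lemma measure_ball_mono:
  assumes M: "mms_standing M" and "0 < r" "r \<le> R"
  shows "measure M (ball x r) \<le> measure M (ball x R)"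
proof (rule measure_mono_fmeasurable)
  show "ball x R \<in> fmeasurable M"
    using M \<open>0 < r\<close> \<open>r \<le> R\<close> unfolding mms_standing_def fmeasurable_def by auto
qed (use M \<open>r \<le> R\<close> in \<open>auto simp: mms_standing_def\<close>)

lemma doubling_atE:
  assumes M: "mms_standing M" and "doubling_at M x"
  obtains D where "0 < D" "\<And>t. 0 < t \<Longrightarrow> measure M (ball x (2 * t)) \<le> D * measure M (ball x t)"
proof -
  obtain D where dbl: "\<And>t. 0 < t \<Longrightarrow> measure M (ball x (2 * t)) \<le> D * measure M (ball x t)"
    using assms(2) unfolding doubling_at_def by blast
  have "0 < D * measure M (ball x 1)"
    using less_le_trans[OF measure_ball_pos[OF M, of "2 * 1"] dbl[of 1]] by simp
  then have "0 < D" using measure_ball_pos[OF M, of 1 x] by (simp add: zero_less_mult_iff)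
  then show ?thesis using dbl that by blast
qed

lemma lowerQ_of_ratio_bound:
  assumes M: "mms_standing M" and q: "0 < q" and K: "0 < K"
    and H: "\<And>r R. 0 < r \<Longrightarrow> 2 * r \<le> R \<Longrightarrow>
       measure M (ball x r) / measure M (ball x R) \<le> K * (r / R) powr q"
  shows "q \<in> lowerQ M x"
proof -
  define C where "C = max K (2 powr q)"
  have C: "0 < C" unfolding C_def using K by simp
  have all: "measure M (ball x r) / measure M (ball x R) \<le> C * (r / R) powr q"
    if r: "0 < r" "r < R" for r R
  proof (cases "2 * r \<le> R")
    case True
    have "K * (r / R) powr q \<le> C * (r / R) powr q" unfolding C_def by (intro mult_right_mono) auto
    then show ?thesis using H[OF r(1) True] by simp
  next
    case False
    have pR: "0 < measure M (ball x R)" using measure_ball_pos[OF M] r by simp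
    have "measure M (ball x r) \<le> measure M (ball x R)" using measure_ball_mono[OF M] r by simp
    then have "measure M (ball x r) / measure M (ball x R) \<le> 1" using pR by simp
    also have "1 = 2 powr q * (1/2) powr q" by (simp add: powr_mult[symmetric])
    also have "\<dots> \<le> C * (r / R) powr q"
    proof (intro mult_mono)
      show "2 powr q \<le> C" unfolding C_def by simp
      show "(1/2) powr q \<le> (r / R) powr q" using False r q by (intro powr_mono2) (auto simp: field_simps)
    qed (use C in auto)
    finally show ?thesis .
  qed
  have "q \<in> lowerQ0 M x" unfolding lowerQ0_def using q C all by auto
  moreover have "q \<in> lowerQinf M x" unfolding lowerQinf_def using q C all by force
  ultimately show ?thesis unfolding lowerQ_def by auto
qed

lemma upperQ_of_ratio_bound:
  assumes M: "mms_standing M" and q: "0 < q" and c: "0 < c" and D: "0 < D"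
    and dbl: "\<And>t. 0 < t \<Longrightarrow> measure M (ball x (2 * t)) \<le> D * measure M (ball x t)"
    and H: "\<And>r R. 0 < r \<Longrightarrow> 2 * r \<le> R \<Longrightarrow>
       c * (r / R) powr q \<le> measure M (ball x r) / measure M (ball x R)"
  shows "q \<in> upperQ M x"
proof -
  define C where "C = min c (1 / D)"
  have C: "0 < C" unfolding C_def using c D by simp
  have all: "C * (r / R) powr q \<le> measure M (ball x r) / measure M (ball x R)"
    if r: "0 < r" "r < R" for r R
  proof (cases "2 * r \<le> R")
    case True
    have "C * (r / R) powr q \<le> c * (r / R) powr q" unfolding C_def by (intro mult_right_mono) auto
    then show ?thesis using H[OF r(1) True] by simp
  next
    case False
    have pR: "0 < measure M (ball x R)" using measure_ball_pos[OF M] r by simp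
    have pr: "0 < measure M (ball x r)" using measure_ball_pos[OF M] r by simp
    have "measure M (ball x R) \<le> measure M (ball x (2 * r))" using measure_ball_mono[OF M] r False by simp
    also have "\<dots> \<le> D * measure M (ball x r)" using dbl r by simp
    finally have le: "measure M (ball x R) \<le> D * measure M (ball x r)" .
    have "C * (r / R) powr q \<le> (1 / D) * 1"
    proof (intro mult_mono)
      show "C \<le> 1 / D" unfolding C_def by simp
      show "(r / R) powr q \<le> 1" using r q by (intro powr_le1) auto
    qed (use D in auto)
    also have "\<dots> \<le> measure M (ball x r) / measure M (ball x R)"
      using le pR D by (simp add: field_simps)
    finally show ?thesis .
  qed
  have "q \<in> upperQ0 M x" unfolding upperQ0_def using q C all by auto
  moreover have "q \<in> upperQinf M x" unfolding upperQinf_def using q C all by force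
  ultimately show ?thesis unfolding upperQ_def by auto
qed

lemma ereal_le_SUP_if_interval_subset:
  assumes p: "0 < p" and S: "\<And>q. 0 < q \<Longrightarrow> q < p \<Longrightarrow> q \<in> S"
  shows "ereal p \<le> (SUP q\<in>S. ereal q)"
  unfolding le_SUP_iff
proof (intro allI impI)
  fix y assume "y < ereal p"
  then obtain z where z: "max y 0 < z" "z < ereal p" using dense[of "max y 0" "ereal p"] p by auto
  then obtain q where "z = ereal q" by (cases z) auto
  then show "\<exists>q\<in>S. y < ereal q" using z S[of q] by (intro bexI[of _ q]) auto
qed

lemma ereal_INF_le_if_interval_subset:
  assumes S: "\<And>q. p < q \<Longrightarrow> q \<in> S"
  shows "(INF q\<in>S. ereal q) \<le> ereal p"
  unfolding INF_le_iff
proof (intro allI impI)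
  fix y assume "ereal p < y"
  then have "ereal p < min y (ereal (p + 1))" by simp
  then obtain z where z: "ereal p < z" "z < min y (ereal (p + 1))" using dense by blast
  then obtain q where "z = ereal q" by (cases z) auto
  then show "\<exists>q\<in>S. ereal q < y" using z S[of q] by (intro bexI[of _ q]) auto
qed

lemma ln_powr_le_const_mult_powr:
  assumes a: "0 \<le> a" and b: "0 < b"
  shows "\<exists>K>0. \<forall>t::real. 1 \<le> t \<longrightarrow> ln t powr a \<le> K * t powr b"
proof (cases "a = 0")
  case True
  show ?thesis
  proof (intro exI[of _ 1] conjI allI impI)
    fix t :: real assume t: "1 \<le> t"
    have "ln t powr a \<le> 1" using True by simp
    also have "1 \<le> t powr b" using t b by (simp add: ge_one_powr_ge_zero)
    finally show "ln t powr a \<le> 1 * t powr b" by simp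
  qed simp
next
  case False
  then have a': "0 < a" using a by simp
  define e where "e = b / a"
  have e: "0 < e" unfolding e_def using a' b by simp
  show ?thesis
  proof (intro exI[of _ "e powr (-a)"] conjI allI impI)
    show "0 < e powr (-a)" using e by simp
    fix t :: real assume t: "1 \<le> t"
    have lt0: "0 \<le> ln t" using t by simp
    have "e * ln t = ln (t powr e)" using t by (simp add: ln_powr)
    also have "\<dots> \<le> t powr e - 1" using t by (intro ln_le_minus_one) simp
    also have "\<dots> \<le> t powr e" by simp
    finally have "ln t \<le> t powr e / e" using e by (simp add: field_simps)
    then have "ln t powr a \<le> (t powr e / e) powr a" using lt0 a by (intro powr_mono2) auto
    also have "\<dots> = t powr (e * a) / e powr a" using e t by (simp add: powr_divide powr_powr)
    also have "e * a = b" unfolding e_def using a' by simp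
    finally show "ln t powr a \<le> e powr (- a) * t powr b" using e by (simp add: powr_minus divide_inverse mult.commute)
  qed
qed

lemma inverse_powr_mult_ln_powr_le:
  assumes a: "0 \<le> a" and q: "q < p"
  shows "\<exists>K>0. \<forall>t::real. 1 \<le> t \<longrightarrow> (1/t) powr p * ln t powr a \<le> K * (1/t) powr q"
proof -
  obtain K where K: "0 < K" "\<And>t. 1 \<le> t \<Longrightarrow> ln t powr a \<le> K * t powr (p - q)"
    using ln_powr_le_const_mult_powr[OF a, of "p - q"] q by auto
  show ?thesis
  proof (intro exI[of _ K] conjI allI impI)
    fix t :: real assume t: "1 \<le> t"
    have "(1/t) powr p * ln t powr a \<le> (1/t) powr p * (K * t powr (p - q))"
      using K(2)[OF t] by (intro mult_left_mono) auto
    also have "\<dots> = K * ((1/t) powr p * t powr (p - q))" by simp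
    also have "(1/t) powr p * t powr (p - q) = (1/t) powr q"
      using t by (simp add: powr_divide powr_diff field_simps)
    finally show "(1/t) powr p * ln t powr a \<le> K * (1/t) powr q" .
  qed (use K in simp)
qed

lemma inverse_powr_le_mult_ln_powr:
  assumes a: "0 \<le> a" and q: "p < q"
  shows "\<exists>c>0. \<forall>t::real. 1 < t \<longrightarrow> c * (1/t) powr q \<le> (1/t) powr p * ln t powr (- a)"
proof -
  obtain K where K: "0 < K" "\<And>t. 1 \<le> t \<Longrightarrow> ln t powr a \<le> K * t powr (q - p)"
    using ln_powr_le_const_mult_powr[OF a, of "q - p"] q by auto
  show ?thesis
  proof (intro exI[of _ "1/K"] conjI allI impI)
    fix t :: real assume t: "1 < t"
    have lt: "0 < ln t" using t by simp
    have la: "0 < ln t powr a" using lt by simp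
    have "1/K * (1/t) powr q = (1/t) powr p / (K * t powr (q - p))"
      using t K by (simp add: powr_divide powr_diff field_simps)
    also have "\<dots> \<le> (1/t) powr p / ln t powr a"
      using K(2)[of t] t la K(1) by (intro divide_left_mono) (auto intro!: mult_pos_pos)
    also have "\<dots> = (1/t) powr p * ln t powr (- a)" using lt by (simp add: powr_minus divide_inverse)
    finally show "1/K * (1/t) powr q \<le> (1/t) powr p * ln t powr (- a)" .
  qed (use K in simp)
qed

lemma lowerQ_of_cap_lower_bound:
  assumes M: "mms_standing M" and p: "1 \<le> p" and q: "0 < q" and C: "0 < C" and K: "0 < K"
    and cap: "\<And>r R. 0 < r \<Longrightarrow> 2 * r \<le> R \<Longrightarrow>
       ennreal (C * measure M (ball x r) * \<Phi> r R) \<le> cap_p M p (ball x r) (ball x R)"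
    and pos: "\<And>r R. 0 < r \<Longrightarrow> 2 * r \<le> R \<Longrightarrow> 0 < \<Phi> r R"
    and bnd: "\<And>r R. 0 < r \<Longrightarrow> 2 * r \<le> R \<Longrightarrow> 1 / (R powr p * \<Phi> r R) \<le> K * (r / R) powr q"
  shows "q \<in> lowerQ M x"
proof (rule lowerQ_of_ratio_bound[OF M q, of "2 powr p * K / C"])
  show "0 < 2 powr p * K / C" using K C by simp
  fix r R :: real assume r: "0 < r" "2 * r \<le> R"
  have pR: "0 < measure M (ball x R)" using measure_ball_pos[OF M] r by auto
  have P: "0 < \<Phi> r R" and Rp: "0 < R powr p" using pos r by auto
  have "C * measure M (ball x r) * \<Phi> r R \<le> 2 powr p * measure M (ball x R) / R powr p"
    using le_if_ennreal_le_le_ennreal[OF cap[OF r] cap_p_ball_le_outer[OF M p r]] by simp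
  then have "measure M (ball x r) / measure M (ball x R) \<le> (2 powr p / C) * (1 / (R powr p * \<Phi> r R))"
    using pR P Rp C by (simp add: field_simps)
  also have "\<dots> \<le> (2 powr p / C) * (K * (r / R) powr q)"
    using bnd[OF r] C by (intro mult_left_mono) auto
  finally show "measure M (ball x r) / measure M (ball x R) \<le> 2 powr p * K / C * (r / R) powr q"
    by simp
qed

lemma upperQ_of_cap_lower_bound:
  assumes M: "mms_standing M" and p: "1 \<le> p" and dbl: "doubling_at M x"
    and q: "0 < q" and C: "0 < C" and c: "0 < c"
    and cap: "\<And>r R. 0 < r \<Longrightarrow> 2 * r \<le> R \<Longrightarrow>
       ennreal (C * measure M (ball x R) * \<Psi> r R) \<le> cap_p M p (ball x r) (ball x R)"
    and bnd: "\<And>r R. 0 < r \<Longrightarrow> 2 * r \<le> R \<Longrightarrow> c * (r / R) powr q \<le> r powr p * \<Psi> r R"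
  shows "q \<in> upperQ M x"
proof -
  obtain D where D: "0 < D" "\<And>t. 0 < t \<Longrightarrow> measure M (ball x (2 * t)) \<le> D * measure M (ball x t)"
    using doubling_atE[OF M dbl] by blast
  show ?thesis
  proof (rule upperQ_of_ratio_bound[OF M q _ D, of "C * c / D"])
    show "0 < C * c / D" using C c D by simp
    fix r R :: real assume r: "0 < r" "2 * r \<le> R"
    have pR: "0 < measure M (ball x R)" using measure_ball_pos[OF M] r by auto
    have rp: "0 < r powr p" using r by simp
    have "C * measure M (ball x R) * \<Psi> r R \<le> D * measure M (ball x r) / r powr p"
      using le_if_ennreal_le_le_ennreal[OF cap[OF r] cap_p_ball_le_inner[OF M p r D(2)[OF r(1)]]] D
      by (simp add: measure_nonneg)
    have "C * c / D * (r / R) powr q \<le> (C / D) * (r powr p * \<Psi> r R)"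
      using bnd[OF r] C D by (simp add: field_simps)
    also have "\<dots> \<le> measure M (ball x r) / measure M (ball x R)"
      using \<open>C * measure M (ball x R) * \<Psi> r R \<le> _\<close> pR rp D by (simp add: field_simps)
    finally show "C * c / D * (r / R) powr q \<le> measure M (ball x r) / measure M (ball x R)" .
  qed
qed

context
  fixes M :: "'a::metric_space measure" and p :: real and x :: 'a
  assumes M: "mms_standing M" and p: "1 \<le> p"
begin

lemma lowerQ_of_cap_ge_inner:
  assumes "\<exists>C>0. \<forall>r R. 0 < 2 * r \<and> 2 * r \<le> R \<longrightarrow>
        ennreal (C * measure M (ball x r) / r powr p) \<le> cap_p M p (ball x r) (ball x R)"
  shows "p \<in> lowerQ M x"
proof -
  obtain C where C: "0 < C" and cap: "\<And>r R. 0 < 2 * r \<Longrightarrow> 2 * r \<le> R \<Longrightarrow>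
      ennreal (C * measure M (ball x r) / r powr p) \<le> cap_p M p (ball x r) (ball x R)"
    using assms by blast
  show ?thesis
  proof (rule lowerQ_of_cap_lower_bound[OF M p _ C, where K=1 and \<Phi>="\<lambda>r R. 1 / r powr p"])
    fix r R :: real assume r: "0 < r" "2 * r \<le> R"
    show "ennreal (C * measure M (ball x r) * (1 / r powr p)) \<le> cap_p M p (ball x r) (ball x R)"
      using cap[of r R] r by simp
    show "1 / (R powr p * (1 / r powr p)) \<le> 1 * (r / R) powr p"
      using r by (simp add: powr_divide)
  qed (use p in auto)
qed

lemma upperQ_of_cap_ge_outer:
  assumes dbl: "doubling_at M x"
    and "\<exists>C>0. \<forall>r R. 0 < 2 * r \<and> 2 * r \<le> R \<longrightarrow>
        ennreal (C * measure M (ball x R) / R powr p) \<le> cap_p M p (ball x r) (ball x R)"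
  shows "p \<in> upperQ M x"
proof -
  obtain C where C: "0 < C" and cap: "\<And>r R. 0 < 2 * r \<Longrightarrow> 2 * r \<le> R \<Longrightarrow>
      ennreal (C * measure M (ball x R) / R powr p) \<le> cap_p M p (ball x r) (ball x R)"
    using assms(2) by blast
  show ?thesis
  proof (rule upperQ_of_cap_lower_bound[OF M p dbl _ C, where c=1 and \<Psi>="\<lambda>r R. 1 / R powr p"])
    fix r R :: real assume r: "0 < r" "2 * r \<le> R"
    show "ennreal (C * measure M (ball x R) * (1 / R powr p)) \<le> cap_p M p (ball x r) (ball x R)"
      using cap[of r R] r by simp
    show "1 * (r / R) powr p \<le> r powr p * (1 / R powr p)"
      using r by (simp add: powr_divide)
  qed (use p in auto)
qed

text \<open>Any power of log(R/r) is dominated by an arbitrarily small power of R/r.\<close>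
lemma SUP_lowerQ_ge_of_cap_ge_inner_log:
  assumes a: "0 \<le> a"
    and "\<exists>C>0. \<forall>r R. 0 < 2 * r \<and> 2 * r \<le> R \<longrightarrow>
        ennreal (C * measure M (ball x r) / r powr p * ln (R / r) powr (- a))
          \<le> cap_p M p (ball x r) (ball x R)"
  shows "ereal p \<le> (SUP q \<in> lowerQ M x. ereal q)"
proof (rule ereal_le_SUP_if_interval_subset)
  show "0 < p" using p by simp
  fix q assume q: "0 < q" "q < p"
  obtain C where C: "0 < C" and cap: "\<And>r R. 0 < 2 * r \<Longrightarrow> 2 * r \<le> R \<Longrightarrow>
      ennreal (C * measure M (ball x r) / r powr p * ln (R / r) powr (- a)) \<le> cap_p M p (ball x r) (ball x R)"
    using assms(2) by blast
  obtain K where K: "0 < K" "\<And>t. 1 \<le> t \<Longrightarrow> (1/t) powr p * ln t powr a \<le> K * (1/t) powr q"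
    using inverse_powr_mult_ln_powr_le[OF a q(2)] by blast
  show "q \<in> lowerQ M x"
  proof (rule lowerQ_of_cap_lower_bound[OF M p q(1) C K(1), where \<Phi>="\<lambda>r R. ln (R / r) powr (- a) / r powr p"])
    fix r R :: real assume r: "0 < r" "2 * r \<le> R"
    show "ennreal (C * measure M (ball x r) * (ln (R / r) powr (- a) / r powr p))
        \<le> cap_p M p (ball x r) (ball x R)"
      using cap[of r R] r by simp
    have t: "1 < R / r" using r by (simp add: field_simps)
    then show "0 < ln (R / r) powr (- a) / r powr p" using r by simp
    have "1 / (R powr p * (ln (R / r) powr (- a) / r powr p)) = (1 / (R / r)) powr p * ln (R / r) powr a"
      using r t by (simp add: powr_divide powr_minus divide_simps)
    then show "1 / (R powr p * (ln (R / r) powr (- a) / r powr p)) \<le> K * (r / R) powr q"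
      using K(2)[of "R / r"] t by simp
  qed
qed

lemma INF_upperQ_le_of_cap_ge_outer_log:
  assumes dbl: "doubling_at M x" and a: "0 \<le> a"
    and "\<exists>C>0. \<forall>r R. 0 < 2 * r \<and> 2 * r \<le> R \<longrightarrow>
        ennreal (C * measure M (ball x R) / R powr p * ln (R / r) powr (- a))
          \<le> cap_p M p (ball x r) (ball x R)"
  shows "(INF q \<in> upperQ M x. ereal q) \<le> ereal p"
proof (rule ereal_INF_le_if_interval_subset)
  fix q assume q: "p < q"
  obtain C where C: "0 < C" and cap: "\<And>r R. 0 < 2 * r \<Longrightarrow> 2 * r \<le> R \<Longrightarrow>
      ennreal (C * measure M (ball x R) / R powr p * ln (R / r) powr (- a)) \<le> cap_p M p (ball x r) (ball x R)"
    using assms(3) by blast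
  obtain c where c: "0 < c" "\<And>t. 1 < t \<Longrightarrow> c * (1/t) powr q \<le> (1/t) powr p * ln t powr (- a)"
    using inverse_powr_le_mult_ln_powr[OF a q] by blast
  show "q \<in> upperQ M x"
  proof (rule upperQ_of_cap_lower_bound[OF M p dbl _ C c(1), where \<Psi>="\<lambda>r R. ln (R / r) powr (- a) / R powr p"])
    show "0 < q" using p q by simp
    fix r R :: real assume r: "0 < r" "2 * r \<le> R"
    show "ennreal (C * measure M (ball x R) * (ln (R / r) powr (- a) / R powr p))
        \<le> cap_p M p (ball x r) (ball x R)"
      using cap[of r R] r by simp
    have t: "1 < R / r" using r by (simp add: field_simps)
    have "r powr p * (ln (R / r) powr (- a) / R powr p) = (1 / (R / r)) powr p * ln (R / r) powr (- a)"
      using r by (simp add: powr_divide divide_simps)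
    then show "c * (r / R) powr q \<le> r powr p * (ln (R / r) powr (- a) / R powr p)"
      using c(2)[OF t] by simp
  qed
qed

lemma lowerQ_of_cap_ge_mixed:
  assumes q: "0 < q"
    and "\<exists>C>0. \<forall>r R. 0 < 2 * r \<and> 2 * r \<le> R \<longrightarrow>
        ennreal (C * measure M (ball x r) / r powr q * R powr (q - p))
          \<le> cap_p M p (ball x r) (ball x R)"
  shows "q \<in> lowerQ M x"
proof -
  obtain C where C: "0 < C" and cap: "\<And>r R. 0 < 2 * r \<Longrightarrow> 2 * r \<le> R \<Longrightarrow>
      ennreal (C * measure M (ball x r) / r powr q * R powr (q - p)) \<le> cap_p M p (ball x r) (ball x R)"
    using assms(2) by blast
  show ?thesis
  proof (rule lowerQ_of_cap_lower_bound[OF M p q C, where K=1 and \<Phi>="\<lambda>r R. R powr (q - p) / r powr q"])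
    fix r R :: real assume r: "0 < r" "2 * r \<le> R"
    show "ennreal (C * measure M (ball x r) * (R powr (q - p) / r powr q)) \<le> cap_p M p (ball x r) (ball x R)"
      using cap[of r R] r by simp
    show "0 < R powr (q - p) / r powr q" using r by simp
    have "R powr p * R powr (q - p) = R powr q" using r by (simp add: powr_add[symmetric])
    then show "1 / (R powr p * (R powr (q - p) / r powr q)) \<le> 1 * (r / R) powr q"
      using r by (simp add: powr_divide divide_simps)
  qed simp
qed

lemma upperQ_of_cap_ge_mixed:
  assumes dbl: "doubling_at M x" and q: "0 < q"
    and "\<exists>C>0. \<forall>r R. 0 < 2 * r \<and> 2 * r \<le> R \<longrightarrow>
        ennreal (C * measure M (ball x R) / R powr q * r powr (q - p))
          \<le> cap_p M p (ball x r) (ball x R)"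
  shows "q \<in> upperQ M x"
proof -
  obtain C where C: "0 < C" and cap: "\<And>r R. 0 < 2 * r \<Longrightarrow> 2 * r \<le> R \<Longrightarrow>
      ennreal (C * measure M (ball x R) / R powr q * r powr (q - p)) \<le> cap_p M p (ball x r) (ball x R)"
    using assms(3) by blast
  show ?thesis
  proof (rule upperQ_of_cap_lower_bound[OF M p dbl q C, where c=1 and \<Psi>="\<lambda>r R. r powr (q - p) / R powr q"])
    fix r R :: real assume r: "0 < r" "2 * r \<le> R"
    show "ennreal (C * measure M (ball x R) * (r powr (q - p) / R powr q)) \<le> cap_p M p (ball x r) (ball x R)"
      using cap[of r R] r by simp
    have "r powr p * r powr (q - p) = r powr q" using r by (simp add: powr_add[symmetric])
    then show "1 * (r / R) powr q \<le> r powr p * (r powr (q - p) / R powr q)"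
      using r by (simp add: powr_divide divide_simps)
  qed simp
qed

end

theorem proposition9p1:
  fixes M :: "'a::metric_space measure" and p :: real and x :: 'a
  assumes "mms_standing M" and "1 \<le> p" and "doubling_at M x"
  shows
   "((\<exists>C>0. \<forall>r R. 0 < 2 * r \<and> 2 * r \<le> R \<longrightarrow>
        ennreal (C * measure M (ball x r) / r powr p) \<le> cap_p M p (ball x r) (ball x R))
      \<longrightarrow> p \<in> lowerQ M x)
  \<and> ((\<exists>C>0. \<forall>r R. 0 < 2 * r \<and> 2 * r \<le> R \<longrightarrow>
        ennreal (C * measure M (ball x R) / R powr p) \<le> cap_p M p (ball x r) (ball x R))
      \<longrightarrow> p \<in> upperQ M x)
  \<and> ((\<exists>C>0. \<forall>r R. 0 < 2 * r \<and> 2 * r \<le> R \<longrightarrow>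
        ennreal (C * measure M (ball x r) / r powr p * ln (R / r) powr (- p))
          \<le> cap_p M p (ball x r) (ball x R))
      \<longrightarrow> ereal p \<le> (SUP q \<in> lowerQ M x. ereal q))
  \<and> ((\<exists>C>0. \<forall>r R. 0 < 2 * r \<and> 2 * r \<le> R \<longrightarrow>
        ennreal (C * measure M (ball x R) / R powr p * ln (R / r) powr (- p))
          \<le> cap_p M p (ball x r) (ball x R))
      \<longrightarrow> (INF q \<in> upperQ M x. ereal q) \<le> ereal p)
  \<and> ((\<exists>C>0. \<forall>r R. 0 < 2 * r \<and> 2 * r \<le> R \<longrightarrow>
        ennreal (C * measure M (ball x r) / r powr p * ln (R / r) powr (1 - p))
          \<le> cap_p M p (ball x r) (ball x R))
      \<longrightarrow> ereal p \<le> (SUP q \<in> lowerQ M x. ereal q))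
  \<and> ((\<exists>C>0. \<forall>r R. 0 < 2 * r \<and> 2 * r \<le> R \<longrightarrow>
        ennreal (C * measure M (ball x R) / R powr p * ln (R / r) powr (1 - p))
          \<le> cap_p M p (ball x r) (ball x R))
      \<longrightarrow> (INF q \<in> upperQ M x. ereal q) \<le> ereal p)
  \<and> (\<forall>q>0. (\<exists>C>0. \<forall>r R. 0 < 2 * r \<and> 2 * r \<le> R \<longrightarrow>
        ennreal (C * measure M (ball x r) / r powr q * R powr (q - p))
          \<le> cap_p M p (ball x r) (ball x R))
      \<longrightarrow> q \<in> lowerQ M x)
  \<and> (\<forall>q>0. (\<exists>C>0. \<forall>r R. 0 < 2 * r \<and> 2 * r \<le> R \<longrightarrow>
        ennreal (C * measure M (ball x R) / R powr q * r powr (q - p))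
          \<le> cap_p M p (ball x r) (ball x R))
      \<longrightarrow> q \<in> upperQ M x)"
proof -
  note M = assms(1) and p = assms(2) and dbl = assms(3)
  have "0 \<le> p" "0 \<le> p - 1" using p by auto
  note log_cases =
    SUP_lowerQ_ge_of_cap_ge_inner_log[OF M p \<open>0 \<le> p\<close>]
    SUP_lowerQ_ge_of_cap_ge_inner_log[OF M p \<open>0 \<le> p - 1\<close>, unfolded minus_diff_eq]
    INF_upperQ_le_of_cap_ge_outer_log[OF M p dbl \<open>0 \<le> p\<close>]
    INF_upperQ_le_of_cap_ge_outer_log[OF M p dbl \<open>0 \<le> p - 1\<close>, unfolded minus_diff_eq]
  show ?thesis
    by (intro conjI impI allI; (rule lowerQ_of_cap_ge_inner[OF M p] upperQ_of_cap_ge_outer[OF M p dbl]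
          log_cases lowerQ_of_cap_ge_mixed[OF M p] upperQ_of_cap_ge_mixed[OF M p dbl]; assumption))
qed

end
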